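(* Let $\mathcal P$ be a polycyclic presentation on $g_1,\ldots,g_n$ and assume that the subpresentation $\mathcal P^{[2]}$ is consistent. Let $\tau\colon F_2\to F_2$ be the monoid homomorphism with $\tau(g_j)=g^{a_{1,j}}$ and $\tau(g_j^{-1})=g^{c_{1,j}}$ for $2\le j\le n$. Then $\tau$ induces an endomorphism of $H^{[2]}$ (i.e. there is an endomorphism $\sigma$ of $H^{[2]}$ with $\sigma\circ\theta_2=\theta_2\circ\tau$) if and only if the equations $c(g_j\,g^{a_{j,k}}\,g_1)=c(g_kg_jg_1)$ for all $n\ge k>j>1$ and $c(g_j^{r_j}g_1)=c(g^{e_j}g_1)$ for all $j>1$ with $r_j<\infty$ hold.
   Context: A polycyclic presentation $\mathcal P$ on generators $g_1,\ldots,g_n$ consists of $r_1,\ldots,r_n\in\mathbb N\cup\{\infty\}$ and integers $e_{i,k},a_{i,j,k},b_{i,j,k}$ ($1\le i<j\le n$, $1\le k\le n$) with $0\le e_{i,k},a_{i,j,k},b_{i,j,k}<r_k$ whenever $r_k<\infty$, and has defining relations $g_i^{r_i}=g^{e_i}$ (for $r_i<\infty$), $g_jg_i=g_ig^{a_{i,j}}$ (for $i<j$), $g_jg_i^{-1}=g_i^{-1}g^{b_{i,j}}$ (for $i<j$, $r_i=\infty$), where $g^{e_i}=g_{i+1}^{e_{i,i+1}}\cdots g_n^{e_{i,n}}$, $g^{a_{i,j}}=g_{i+1}^{a_{i,j,i+1}}\cdots g_n^{a_{i,j,n}}$, $g^{b_{i,j}}=g_{i+1}^{b_{i,j,i+1}}\cdots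 g_n^{b_{i,j,n}}$ (with $g_k^x$ for $x<0$ meaning $(g_k^{-1})^{|x|}$). From the presentation one computes integers $c_{i,j,k},d_{i,j,k},f_{i,k}$ (in $[0,r_k)$ when $r_k<\infty$) such that in the presented group $g_j^{-1}g_i=g_ig^{c_{i,j}}$ ($i<j$, $r_j=\infty$), $g_j^{-1}g_i^{-1}=g_i^{-1}g^{d_{i,j}}$ ($i<j$, $r_i=r_j=\infty$), $g_i^{-1}=g_i^{r_i-1}g^{f_i}$ ($r_i<\infty$); in particular $g^{c_{1,j}}=g_2^{c_{1,j,2}}\cdots g_n^{c_{1,j,n}}$ is the reduced word representing the inverse of $g^{a_{1,j}}$. Let $M$ be the free monoid on $\{g_1^{\pm1},\ldots,g_n^{\pm1}\}$. A collection step replaces a subword equal to the left-hand side of one of these six kinds of relations by its right-hand side, or deletes $g_ig_i^{-1}$ or $g_i^{-1}g_i$; a word admitting no step is reduced (of the form $g_1^{x_1}\cdots g_n^{x_n}$ with $0\le x_i<r_i$ if $r_i<\infty$). The collection-to-the-left algorithm applies steps, always choosing the leftmost occurrence of a non-reduced subword involving a generator of smallest index (lower index has priority), until the word is reduced; $c\colon M\to M$ maps a word to the result. $\mathcal P^{[2]}$ is the presentation on $g_2,\ldots,g_n$ consisting of those relations above with $i\ge2$; $H^{[2]}$ is the group it defines; $F_2$ is the free monoid on $\{g_2^{\pm1},\ldots,g_n^{\pm1}\}$ and $\theta_2\colon F_2\to H^{[2]}$ the natural epimorphism. $\mathcal P^{[2]}$ is consistent if every element of $H^{[2]}$ is represented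 by exactly one reduced word in $g_2,\ldots,g_n$. *)

theory Defs
  imports "HOL-Algebra.Group" "HOL-Library.Extended_Nat" "HOL-Library.Product_Lexorder"
begin

text \<open>A letter (i, True) stands for g_i, (i, False) for g_i^{-1}.
  Words are lists of letters (elements of the free monoid M).\<close>

type_synonym letter = "nat \<times> bool"
type_synonym word = "letter list"

definition gpow :: "nat \<Rightarrow> int \<Rightarrow> word" where
  "gpow k x = (if 0 \<le> x then replicate (nat x) (k, True) else replicate (nat (- x)) (k, False))"

text \<open>Data of a polycyclic presentation on g_1..g_n, together with the derived
  exponents c, d, f. Infinite relative orders are represented by \<infinity> :: enat.\<close>

record pcp =
  pc_n :: nat
  pc_r :: "nat \<Rightarrow> enat"
  pc_e :: "nat \<Rightarrow> nat \<Rightarrow> int"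
  pc_a :: "nat \<Rightarrow> nat \<Rightarrow> nat \<Rightarrow> int"
  pc_b :: "nat \<Rightarrow> nat \<Rightarrow> nat \<Rightarrow> int"
  pc_c :: "nat \<Rightarrow> nat \<Rightarrow> nat \<Rightarrow> int"
  pc_d :: "nat \<Rightarrow> nat \<Rightarrow> nat \<Rightarrow> int"
  pc_f :: "nat \<Rightarrow> nat \<Rightarrow> int"

definition gvec :: "pcp \<Rightarrow> nat \<Rightarrow> (nat \<Rightarrow> int) \<Rightarrow> word" where
  "gvec P i v = concat (map (\<lambda>k. gpow k (v k)) [Suc i..<Suc (pc_n P)])"

definition in_range :: "pcp \<Rightarrow> nat \<Rightarrow> int \<Rightarrow> bool" where
  "in_range P k x = (\<forall>t. pc_r P k = enat t \<longrightarrow> 0 \<le> x \<and> x < int t)"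

definition pcp_valid :: "pcp \<Rightarrow> bool" where
  "pcp_valid P = (
     (\<forall>i\<in>{1..pc_n P}. pc_r P i \<noteq> 0) \<and>
     (\<forall>i\<in>{1..pc_n P}. \<forall>k\<in>{1..pc_n P}. pc_r P i \<noteq> \<infinity> \<longrightarrow> in_range P k (pc_e P i k)) \<and>
     (\<forall>i j k. 1 \<le> i \<and> i < j \<and> j \<le> pc_n P \<and> 1 \<le> k \<and> k \<le> pc_n P \<longrightarrow>
         in_range P k (pc_a P i j k) \<and>
         (pc_r P i = \<infinity> \<longrightarrow> in_range P k (pc_b P i j k))))"

definition alph :: "pcp \<Rightarrow> nat \<Rightarrow> letter set" where
  "alph P k = {(i, s). k \<le> i \<and> i \<le> pc_n P}"

text \<open>Defining relations of the subpresentation P^[k] (those with i \<ge> k);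
  P^[1] is P itself.\<close>
definition rels :: "pcp \<Rightarrow> nat \<Rightarrow> (word \<times> word) set" where
  "rels P k =
     {(replicate t (i, True), gvec P i (pc_e P i)) | i t. k \<le> i \<and> i \<le> pc_n P \<and> pc_r P i = enat t} \<union>
     {([(j, True), (i, True)], (i, True) # gvec P i (pc_a P i j)) | i j. k \<le> i \<and> i < j \<and> j \<le> pc_n P} \<union>
     {([(j, True), (i, False)], (i, False) # gvec P i (pc_b P i j)) | i j.
          k \<le> i \<and> i < j \<and> j \<le> pc_n P \<and> pc_r P i = \<infinity>}"

text \<open>The congruence on words over g_k..g_n generated by the relations of P^[k]
  and free cancellation; its classes are the elements of the presented group.\<close>
inductive pc_eq :: "pcp \<Rightarrow> nat \<Rightarrow> word \<Rightarrow> word \<Rightarrow> bool" for P k where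
  refl: "w \<in> lists (alph P k) \<Longrightarrow> pc_eq P k w w"
| sym: "pc_eq P k u v \<Longrightarrow> pc_eq P k v u"
| trans: "pc_eq P k u v \<Longrightarrow> pc_eq P k v w \<Longrightarrow> pc_eq P k u w"
| rel: "(u, v) \<in> rels P k \<Longrightarrow> x \<in> lists (alph P k) \<Longrightarrow> y \<in> lists (alph P k) \<Longrightarrow>
         pc_eq P k (x @ u @ y) (x @ v @ y)"
| cancel: "(i, s) \<in> alph P k \<Longrightarrow> x \<in> lists (alph P k) \<Longrightarrow> y \<in> lists (alph P k) \<Longrightarrow>
         pc_eq P k (x @ [(i, s), (i, \<not> s)] @ y) (x @ y)"

definition theta :: "pcp \<Rightarrow> nat \<Rightarrow> word \<Rightarrow> word set" where
  "theta P k w = {v \<in> lists (alph P k). pc_eq P k w v}"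

text \<open>The group H^[k] defined by P^[k] (H^[1] is the group defined by P).\<close>
definition pc_group :: "pcp \<Rightarrow> nat \<Rightarrow> word set monoid" where
  "pc_group P k =
     \<lparr> carrier = theta P k ` lists (alph P k),
       mult = (\<lambda>X Y. theta P k ((SOME u. u \<in> X) @ (SOME v. v \<in> Y))),
       one = theta P k [] \<rparr>"

definition reduced_from :: "pcp \<Rightarrow> nat \<Rightarrow> word \<Rightarrow> bool" where
  "reduced_from P k w = (\<exists>x. w = concat (map (\<lambda>i. gpow i (x i)) [k..<Suc (pc_n P)]) \<and>
                               (\<forall>i\<in>{k..pc_n P}. in_range P i (x i)))"

definition consistent_from :: "pcp \<Rightarrow> nat \<Rightarrow> bool" where
  "consistent_from P k = (\<forall>X\<in>carrier (pc_group P k).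
      \<exists>!w. w \<in> lists (alph P k) \<and> reduced_from P k w \<and> theta P k w = X)"

text \<open>Properties of the derived exponents c, d, f: for i \<ge> 2 the relations hold in
  H^[2]; g^{c_{1,j}} is the reduced word representing the inverse of g^{a_{1,j}} in H^[2];
  the remaining relations for i = 1 hold in the group defined by P.\<close>
definition pcp_derived :: "pcp \<Rightarrow> bool" where
  "pcp_derived P = (
     (\<forall>i j k. 1 \<le> i \<and> i < j \<and> j \<le> pc_n P \<and> 1 \<le> k \<and> k \<le> pc_n P \<longrightarrow>
         (pc_r P j = \<infinity> \<longrightarrow> in_range P k (pc_c P i j k)) \<and>
         (pc_r P i = \<infinity> \<and> pc_r P j = \<infinity> \<longrightarrow> in_range P k (pc_d P i j k))) \<and>
     (\<forall>i\<in>{1..pc_n P}. \<forall>k\<in>{1..pc_n P}. pc_r P i \<noteq> \<infinity> \<longrightarrow> in_range P k (pc_f P i k)) \<and>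
     (\<forall>i j. 2 \<le> i \<and> i < j \<and> j \<le> pc_n P \<and> pc_r P j = \<infinity> \<longrightarrow>
         pc_eq P 2 [(j, False), (i, True)] ((i, True) # gvec P i (pc_c P i j))) \<and>
     (\<forall>i j. 2 \<le> i \<and> i < j \<and> j \<le> pc_n P \<and> pc_r P i = \<infinity> \<and> pc_r P j = \<infinity> \<longrightarrow>
         pc_eq P 2 [(j, False), (i, False)] ((i, False) # gvec P i (pc_d P i j))) \<and>
     (\<forall>i t. 2 \<le> i \<and> i \<le> pc_n P \<and> pc_r P i = enat t \<longrightarrow>
         pc_eq P 2 [(i, False)] (replicate (t - 1) (i, True) @ gvec P i (pc_f P i))) \<and>
     (\<forall>j. 2 \<le> j \<and> j \<le> pc_n P \<longrightarrow>
         (\<forall>k\<in>{2..pc_n P}. in_range P k (pc_c P 1 j k)) \<and>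
         pc_eq P 2 (gvec P 1 (pc_a P 1 j) @ gvec P 1 (pc_c P 1 j)) []) \<and>
     (\<forall>j. 1 < j \<and> j \<le> pc_n P \<and> pc_r P 1 = \<infinity> \<and> pc_r P j = \<infinity> \<longrightarrow>
         pc_eq P 1 [(j, False), (1, False)] ((1, False) # gvec P 1 (pc_d P 1 j))) \<and>
     (\<forall>t. 1 \<le> pc_n P \<and> pc_r P 1 = enat t \<longrightarrow>
         pc_eq P 1 [(1, False)] (replicate (t - 1) (1, True) @ gvec P 1 (pc_f P 1))))"

text \<open>Candidate collection steps in w: (m, p, q, l, rhs) means that the subword of
  length l starting at position p is the left-hand side of a relation of kind q
  (1: power, 2: conjugate g_j g_i, 3: g_j g_i^{-1}, 4: g_j^{-1} g_i, 5: g_j^{-1} g_i^{-1},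
  6: g_i^{-1}, 7: free cancellation), m is the smallest generator index involved,
  and rhs is the replacement.\<close>
definition cands :: "pcp \<Rightarrow> word \<Rightarrow> (nat \<times> nat \<times> nat \<times> nat \<times> word) set" where
  "cands P w =
     {(i, p, 1, t, gvec P i (pc_e P i)) | i p t. 1 \<le> i \<and> i \<le> pc_n P \<and> pc_r P i = enat t \<and>
          take t (drop p w) = replicate t (i, True) \<and> p + t \<le> length w} \<union>
     {(i, p, 2, 2, (i, True) # gvec P i (pc_a P i j)) | i j p. 1 \<le> i \<and> i < j \<and> j \<le> pc_n P \<and>
          take 2 (drop p w) = [(j, True), (i, True)]} \<union>
     {(i, p, 3, 2, (i, False) # gvec P i (pc_b P i j)) | i j p. 1 \<le> i \<and> i < j \<and> j \<le> pc_n P \<and>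
          pc_r P i = \<infinity> \<and> take 2 (drop p w) = [(j, True), (i, False)]} \<union>
     {(i, p, 4, 2, (i, True) # gvec P i (pc_c P i j)) | i j p. 1 \<le> i \<and> i < j \<and> j \<le> pc_n P \<and>
          pc_r P j = \<infinity> \<and> take 2 (drop p w) = [(j, False), (i, True)]} \<union>
     {(i, p, 5, 2, (i, False) # gvec P i (pc_d P i j)) | i j p. 1 \<le> i \<and> i < j \<and> j \<le> pc_n P \<and>
          pc_r P i = \<infinity> \<and> pc_r P j = \<infinity> \<and> take 2 (drop p w) = [(j, False), (i, False)]} \<union>
     {(i, p, 6, 1, replicate (t - 1) (i, True) @ gvec P i (pc_f P i)) | i p t. 1 \<le> i \<and> i \<le> pc_n P \<and>
          pc_r P i = enat t \<and> take 1 (drop p w) = [(i, False)]} \<union>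
     {(i, p, 7, 2, []) | i s p. 1 \<le> i \<and> i \<le> pc_n P \<and> take 2 (drop p w) = [(i, s), (i, \<not> s)]}"

text \<open>One step of collection to the left: among all possible steps choose the one
  involving the smallest generator index, then the leftmost one (ties between
  kinds of relation at the same position broken by the kind number).\<close>
definition collect_step :: "pcp \<Rightarrow> word \<Rightarrow> word option" where
  "collect_step P w =
     (if cands P w = {} then None
      else (let (m, p, q) = Min ((\<lambda>(m, p, q, l, rhs). (m, p, q)) ` cands P w);
                (l, rhs) = (THE lr. (m, p, q, fst lr, snd lr) \<in> cands P w)
            in Some (take p w @ rhs @ drop (p + l) w)))"

definition collect :: "pcp \<Rightarrow> word \<Rightarrow> word" where
  "collect P w = (THE v. (\<lambda>x y. collect_step P x = Some y)\<^sup>*\<^sup>* w v \<and> collect_step P v = None)"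

definition tau :: "pcp \<Rightarrow> word \<Rightarrow> word" where
  "tau P w = concat (map (\<lambda>(j, s). if s then gvec P 1 (pc_a P 1 j) else gvec P 1 (pc_c P 1 j)) w)"

end

theory Submission
  imports Defs
begin

(*
  Consistency of P^[2] makes collection compute normal forms in H^[2], and more: every H^[k]
  with k >= 2 embeds in H^[2]. Indeed, by downward induction on k, the derived relations
  (exponents c, d, f) hold already in H^[k], so collection inside P^[k] stays in H^[k] and ends in
  a reduced word; two words that are equal in H^[2] therefore have the same collected form.

  The map tau induces an endomorphism iff theta_2 o tau respects the defining relations of P^[2].
  Collecting u g_1, for a word u in g_2, ..., g_n, moves g_1 to the front letter by letter, which
  yields g_1 tau(u), and then collects tau(u) in H^[2]. Hence c(u g_1) = c(v g_1) iff
  theta_2(tau u) = theta_2(tau v), so the two families of equations say exactly that theta_2 o tau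
  respects the relations of type a and the power relations. The relations of type b follow by
  downward induction on the level m: conjugation by g_m acts on words in g_(m+1), ..., g_n as the
  substitution g_l |-> g^(a_(m,l)), both in H^[2] and after applying theta_2 o tau.
*)

lemma (in group) conj_inv_eq:
  assumes "x \<in> carrier G" "b \<in> carrier G" "c \<in> carrier G" and "x \<otimes> b = b \<otimes> c"
  shows "inv x \<otimes> b = b \<otimes> inv c"
proof -
  from assms have "b = inv x \<otimes> b \<otimes> c" by (simp add: inv_solve_left m_assoc)
  with assms show ?thesis by (simp add: inv_solve_right)
qed

lemma (in group) conj_eq_iff:
  assumes "a \<in> carrier G" "b \<in> carrier G" "c \<in> carrier G"
  shows "b \<otimes> a = a \<otimes> c \<longleftrightarrow> c \<otimes> inv a = inv a \<otimes> b"
proof -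
  have "b \<otimes> a = a \<otimes> c \<longleftrightarrow> c = inv a \<otimes> (b \<otimes> a)"
    using assms inv_solve_left[of c a "b \<otimes> a"] by auto
  also have "\<dots> \<longleftrightarrow> c \<otimes> inv a = inv a \<otimes> b"
    using assms inv_solve_right'[of "inv a \<otimes> b" c a] by (auto simp: m_assoc)
  finally show ?thesis .
qed

lemma (in group) inv_eq_pow_mult_inv:
  assumes "b \<in> carrier G" "c \<in> carrier G" "b [^] (t::nat) = c" "t \<noteq> 0"
  shows "inv b = b [^] (t - 1) \<otimes> inv c"
proof -
  have "c = b \<otimes> b [^] (t - 1)"
    using assms nat_pow_Suc2[of b "t - 1"] by simp
  with assms show ?thesis by (simp add: inv_mult_group m_assoc [symmetric])
qed

lemma fst_in_set_gpow: "a \<in> set (gpow k x) \<Longrightarrow> fst a = k"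
  by (auto simp: gpow_def split: if_splits)

lemma snd_in_set_gpow: "a \<in> set (gpow k x) \<Longrightarrow> snd a = (0 \<le> x)"
  by (auto simp: gpow_def split: if_splits)

lemma gpow_0 [simp]: "gpow k 0 = []"
  by (simp add: gpow_def)

lemma gpow_Cons: "x \<noteq> 0 \<Longrightarrow> gpow k x = (k, 0 \<le> x) # gpow k (if 0 \<le> x then x - 1 else x + 1)"
proof (cases "0 \<le> x")
  case True
  moreover assume "x \<noteq> 0"
  ultimately have "nat x = Suc (nat (x - 1))" by linarith
  with True show ?thesis by (simp add: gpow_def)
next
  case False
  then have "nat (- x) = Suc (nat (- (x + 1)))" by linarith
  with False show ?thesis by (cases "x = -1") (auto simp: gpow_def)
qed

lemma gpow_add_one: "0 \<le> x \<Longrightarrow> gpow k (x + 1) = (k, True) # gpow k x"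
  using gpow_Cons[of "x + 1" k] by simp

lemma gpow_diff_one: "x \<le> 0 \<Longrightarrow> gpow k (x - 1) = (k, False) # gpow k x"
  using gpow_Cons[of "x - 1" k] by simp

lemma letter_in_gvec: "(l, s) \<in> set (gvec P i v) \<Longrightarrow> i < l \<and> l \<le> pc_n P"
  by (auto simp: gvec_def dest!: fst_in_set_gpow)

lemma gvec_in_lists: "k \<le> Suc i \<Longrightarrow> gvec P i v \<in> lists (alph P k)"
  by (auto simp: alph_def dest!: letter_in_gvec)

lemma lists_alph_mono: "k \<le> k' \<Longrightarrow> w \<in> lists (alph P k') \<Longrightarrow> w \<in> lists (alph P k)"
  by (auto simp: alph_def)

lemma nth_in_alph:
  "w \<in> lists (alph P k) \<Longrightarrow> p < length w \<Longrightarrow> k \<le> fst (w ! p) \<and> fst (w ! p) \<le> pc_n P"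
  by (auto simp: alph_def dest!: nth_mem split: prod.splits)

lemma relative_order_nonzero: "pcp_valid P \<Longrightarrow> 1 \<le> i \<Longrightarrow> i \<le> pc_n P \<Longrightarrow> pc_r P i \<noteq> enat 0"
  unfolding pcp_valid_def zero_enat_def[symmetric] by auto

lemma in_range_0: "pcp_valid P \<Longrightarrow> 1 \<le> i \<Longrightarrow> i \<le> pc_n P \<Longrightarrow> in_range P i 0"
  using relative_order_nonzero unfolding in_range_def by fastforce

lemma gvec_neg_letters_infinite:
  assumes "\<forall>k. i < k \<and> k \<le> pc_n P \<longrightarrow> in_range P k (v k)"
  shows "\<forall>(l, s) \<in> set (gvec P i v). \<not> s \<longrightarrow> pc_r P l = \<infinity>"
proof clarify
  fix l s assume "(l, s) \<in> set (gvec P i v)" "\<not> s"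
  then obtain k where k: "k \<in> set [Suc i..<Suc (pc_n P)]" "(l, False) \<in> set (gpow k (v k))"
    unfolding gvec_def by auto
  then have "l = k" "v k < 0" using fst_in_set_gpow snd_in_set_gpow by fastforce+
  moreover have "in_range P k (v k)" using assms k(1) by auto
  ultimately show "pc_r P l = \<infinity>" by (cases "pc_r P l") (auto simp: in_range_def)
qed

lemma pc_eq_in_lists: "pc_eq P k u v \<Longrightarrow> u \<in> lists (alph P k) \<and> v \<in> lists (alph P k)"
proof (induction rule: pc_eq.induct)
  case (rel u v x y)
  then have "u \<in> lists (alph P k) \<and> v \<in> lists (alph P k)"
    unfolding rels_def by (fastforce simp: alph_def dest: letter_in_gvec)
  with rel show ?case by auto
qed (auto simp: alph_def)

lemma pc_eq_relI: "(u, v) \<in> rels P k \<Longrightarrow> pc_eq P k u v"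
  using pc_eq.rel[of u v P k "[]" "[]"] by simp

lemma pc_eq_context:
  "pc_eq P k u v \<Longrightarrow> x \<in> lists (alph P k) \<Longrightarrow> y \<in> lists (alph P k) \<Longrightarrow>
   pc_eq P k (x @ u @ y) (x @ v @ y)"
proof (induction arbitrary: x y rule: pc_eq.induct)
  case (refl w)
  then show ?case by (intro pc_eq.refl) auto
next
  case (rel u v x' y')
  then show ?case using pc_eq.rel[of u v P k "x @ x'" "y' @ y"] by auto
next
  case (cancel i s x' y')
  then show ?case using pc_eq.cancel[of i s P k "x @ x'" "y' @ y"] by auto
next
  case sym
  then show ?case by (blast intro: pc_eq.sym)
next
  case trans
  then show ?case by (blast intro: pc_eq.trans)
qed

lemma pc_eq_append_left: "pc_eq P k u v \<Longrightarrow> x \<in> lists (alph P k) \<Longrightarrow> pc_eq P k (x @ u) (x @ v)"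
  using pc_eq_context[of P k u v x "[]"] by simp

lemma pc_eq_append_right: "pc_eq P k u v \<Longrightarrow> y \<in> lists (alph P k) \<Longrightarrow> pc_eq P k (u @ y) (v @ y)"
  using pc_eq_context[of P k u v "[]" y] by simp

lemma pc_eq_append: "pc_eq P k u v \<Longrightarrow> pc_eq P k u' v' \<Longrightarrow> pc_eq P k (u @ u') (v @ v')"
  by (meson pc_eq.trans pc_eq_append_left pc_eq_append_right pc_eq_in_lists)

lemma rels_mono: "k \<le> k' \<Longrightarrow> rels P k' \<subseteq> rels P k"
  unfolding rels_def by (intro Un_mono) fastforce+

lemma rels_cases:
  assumes "(u, v) \<in> rels P m"
  obtains (higher) "(u, v) \<in> rels P (Suc m)"
  | (power) t where "m \<le> pc_n P" "pc_r P m = enat t" "u = replicate t (m, True)"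
      "v = gvec P m (pc_e P m)"
  | (conj_a) j where "m < j" "j \<le> pc_n P" "u = [(j, True), (m, True)]"
      "v = (m, True) # gvec P m (pc_a P m j)"
  | (conj_b) j where "m < j" "j \<le> pc_n P" "pc_r P m = \<infinity>" "u = [(j, True), (m, False)]"
      "v = (m, False) # gvec P m (pc_b P m j)"
proof (cases "(u, v) \<in> rels P (Suc m)")
  case False
  with assms have "(\<exists>t. m \<le> pc_n P \<and> pc_r P m = enat t \<and> u = replicate t (m, True) \<and>
        v = gvec P m (pc_e P m)) \<or>
      (\<exists>j. m < j \<and> j \<le> pc_n P \<and> u = [(j, True), (m, True)] \<and>
        v = (m, True) # gvec P m (pc_a P m j)) \<or>
      (\<exists>j. m < j \<and> j \<le> pc_n P \<and> pc_r P m = \<infinity> \<and> u = [(j, True), (m, False)] \<and>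
        v = (m, False) # gvec P m (pc_b P m j))"
    unfolding rels_def by (auto simp: not_less_eq_eq le_less)
  with that(2-4) show thesis by blast
qed (rule that(1))

lemma pc_eq_level_mono: "pc_eq P k' u v \<Longrightarrow> k \<le> k' \<Longrightarrow> pc_eq P k u v"
proof (induction rule: pc_eq.induct)
  case (refl w)
  then show ?case by (intro pc_eq.refl) (auto simp: alph_def)
next
  case (rel u v x y)
  then have "(u, v) \<in> rels P k" using rels_mono by blast
  moreover have "x \<in> lists (alph P k)" "y \<in> lists (alph P k)"
    using rel lists_alph_mono by metis+
  ultimately show ?case by (rule pc_eq.rel)
next
  case (cancel i s x y)
  then have "(i, s) \<in> alph P k" by (auto simp: alph_def)
  moreover have "x \<in> lists (alph P k)" "y \<in> lists (alph P k)"
    using cancel lists_alph_mono by metis+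
  ultimately show ?case by (rule pc_eq.cancel)
next
  case sym
  then show ?case by (blast intro: pc_eq.sym)
next
  case trans
  then show ?case by (blast intro: pc_eq.trans)
qed

definition word_inv :: "word \<Rightarrow> word" where
  "word_inv w = rev (map (\<lambda>(i, s). (i, \<not> s)) w)"

lemma word_inv_simps [simp]:
  "word_inv [] = []"
  "word_inv (a # w) = word_inv w @ [(fst a, \<not> snd a)]"
  "word_inv (u @ v) = word_inv v @ word_inv u"
  by (auto simp: word_inv_def split: prod.splits)

lemma word_inv_in_lists [simp]: "word_inv w \<in> lists (alph P k) \<longleftrightarrow> w \<in> lists (alph P k)"
  by (induction w) (auto simp: alph_def)

lemma pc_eq_word_inv_left: "w \<in> lists (alph P k) \<Longrightarrow> pc_eq P k (word_inv w @ w) []"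
proof (induction w)
  case Nil
  then show ?case by (auto intro: pc_eq.refl)
next
  case (Cons a w)
  obtain i s where a: "a = (i, s)" by (cases a)
  have "word_inv w \<in> lists (alph P k)" using Cons by simp
  with Cons have "pc_eq P k (word_inv w @ [(i, \<not> s), (i, \<not> \<not> s)] @ w) (word_inv w @ w)"
    by (intro pc_eq.cancel) (auto simp: a alph_def simp del: in_lists_conv_set)
  with Cons show ?case by (simp add: a) (metis pc_eq.trans)
qed

lemma theta_self: "u \<in> lists (alph P k) \<Longrightarrow> u \<in> theta P k u"
  by (auto simp: theta_def intro: pc_eq.refl)

lemma theta_eq_iff:
  "u \<in> lists (alph P k) \<Longrightarrow> v \<in> lists (alph P k) \<Longrightarrow> theta P k u = theta P k v \<longleftrightarrow> pc_eq P k u v"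
proof
  assume "u \<in> lists (alph P k)" "theta P k u = theta P k v"
  then have "u \<in> theta P k v" using theta_self by metis
  then show "pc_eq P k u v" by (auto simp: theta_def intro: pc_eq.sym)
next
  assume "pc_eq P k u v"
  then show "theta P k u = theta P k v"
    by (auto simp: theta_def intro: pc_eq.sym pc_eq.trans)
qed

lemma theta_eqI: "pc_eq P k u v \<Longrightarrow> theta P k u = theta P k v"
  using pc_eq_in_lists theta_eq_iff by blast

lemma carrier_pc_group: "carrier (pc_group P k) = theta P k ` lists (alph P k)"
  by (simp add: pc_group_def)

lemma one_pc_group: "\<one>\<^bsub>pc_group P k\<^esub> = theta P k []"
  by (simp add: pc_group_def)

lemma theta_in_carrier: "u \<in> lists (alph P k) \<Longrightarrow> theta P k u \<in> carrier (pc_group P k)"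
  by (simp add: carrier_pc_group)

lemma theta_append:
  assumes "u \<in> lists (alph P k)" and "v \<in> lists (alph P k)"
  shows "theta P k (u @ v) = theta P k u \<otimes>\<^bsub>pc_group P k\<^esub> theta P k v"
proof -
  define a where "a = (SOME a. a \<in> theta P k u)"
  define b where "b = (SOME b. b \<in> theta P k v)"
  have "a \<in> theta P k u" "b \<in> theta P k v"
    unfolding a_def b_def using assms theta_self by (metis someI)+
  then have "pc_eq P k (u @ v) (a @ b)" by (auto simp: theta_def intro: pc_eq_append)
  then show ?thesis by (simp add: pc_group_def a_def b_def theta_eqI)
qed

lemma group_pc_group: "group (pc_group P k)"
proof (rule groupI)
  fix x y z
  assume "x \<in> carrier (pc_group P k)" "y \<in> carrier (pc_group P k)" "z \<in> carrier (pc_group P k)"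
  then obtain u v w where uvw: "u \<in> lists (alph P k)" "v \<in> lists (alph P k)" "w \<in> lists (alph P k)"
    and xyz: "x = theta P k u" "y = theta P k v" "z = theta P k w"
    by (auto simp: carrier_pc_group)
  then show "x \<otimes>\<^bsub>pc_group P k\<^esub> y \<in> carrier (pc_group P k)"
    by (simp add: carrier_pc_group theta_append [symmetric])
  from uvw xyz
  show "x \<otimes>\<^bsub>pc_group P k\<^esub> y \<otimes>\<^bsub>pc_group P k\<^esub> z = x \<otimes>\<^bsub>pc_group P k\<^esub> (y \<otimes>\<^bsub>pc_group P k\<^esub> z)"
    by (simp add: theta_append [symmetric] del: in_lists_conv_set)
  from uvw xyz show "\<one>\<^bsub>pc_group P k\<^esub> \<otimes>\<^bsub>pc_group P k\<^esub> x = x"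
    by (simp add: theta_append [symmetric] one_pc_group del: in_lists_conv_set)
  from uvw xyz have "theta P k (word_inv u) \<otimes>\<^bsub>pc_group P k\<^esub> x = \<one>\<^bsub>pc_group P k\<^esub>"
    by (simp add: theta_append [symmetric] one_pc_group theta_eqI pc_eq_word_inv_left
        del: in_lists_conv_set)
  with uvw show "\<exists>y \<in> carrier (pc_group P k). y \<otimes>\<^bsub>pc_group P k\<^esub> x = \<one>\<^bsub>pc_group P k\<^esub>"
    by (metis theta_in_carrier word_inv_in_lists)
qed (auto simp: carrier_pc_group one_pc_group)

lemma theta_word_inv:
  "u \<in> lists (alph P k) \<Longrightarrow> theta P k (word_inv u) = inv\<^bsub>pc_group P k\<^esub> theta P k u"
proof -
  assume u: "u \<in> lists (alph P k)"
  have "theta P k (word_inv u) \<otimes>\<^bsub>pc_group P k\<^esub> theta P k u = \<one>\<^bsub>pc_group P k\<^esub>"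
    using u by (simp add: theta_append [symmetric] one_pc_group theta_eqI pc_eq_word_inv_left
        del: in_lists_conv_set)
  moreover have "theta P k (word_inv u) \<in> carrier (pc_group P k)"
    using u by (metis theta_in_carrier word_inv_in_lists)
  ultimately show ?thesis
    using u by (intro group.inv_equality[OF group_pc_group, symmetric]) (auto intro: theta_in_carrier)
qed

lemma theta_inv_letter:
  "k \<le> l \<Longrightarrow> l \<le> pc_n P \<Longrightarrow> theta P k [(l, False)] = inv\<^bsub>pc_group P k\<^esub> theta P k [(l, True)]"
  using theta_word_inv[of "[(l, True)]" P k] by (simp add: alph_def)

lemma theta_replicate:
  "(i, True) \<in> alph P k \<Longrightarrow>
   theta P k (replicate t (i, True)) = theta P k [(i, True)] [^]\<^bsub>pc_group P k\<^esub> t"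
proof (induction t)
  case 0
  then show ?case by (simp add: one_pc_group)
next
  case (Suc t)
  then have "theta P k (replicate t (i, True) @ [(i, True)]) =
      theta P k (replicate t (i, True)) \<otimes>\<^bsub>pc_group P k\<^esub> theta P k [(i, True)]"
    by (intro theta_append) auto
  with Suc show ?case by (simp add: replicate_append_same [symmetric])
qed

lemma pc_eq_cancel_left:
  assumes "x \<in> lists (alph P k)" "u \<in> lists (alph P k)" "v \<in> lists (alph P k)"
    and "pc_eq P k (x @ u) (x @ v)"
  shows "pc_eq P k u v"
proof -
  interpret group "pc_group P k" by (rule group_pc_group)
  from assms have "theta P k x \<otimes>\<^bsub>pc_group P k\<^esub> theta P k u = theta P k x \<otimes>\<^bsub>pc_group P k\<^esub> theta P k v"
    by (simp add: theta_append [symmetric] theta_eqI del: in_lists_conv_set)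
  with assms show ?thesis by (simp add: theta_in_carrier theta_eq_iff [symmetric])
qed

lemma hom_from_word_map:
  assumes resp: "\<And>u v. pc_eq P k u v \<Longrightarrow> F u = F v"
    and F_append: "\<And>u v. u \<in> lists (alph P k) \<Longrightarrow> v \<in> lists (alph P k) \<Longrightarrow>
      F (u @ v) = F u \<otimes>\<^bsub>H\<^esub> F v"
    and F_in_carrier: "\<And>u. F u \<in> carrier H"
  obtains \<sigma> where "\<sigma> \<in> hom (pc_group P k) H" "\<And>w. w \<in> lists (alph P k) \<Longrightarrow> \<sigma> (theta P k w) = F w"
proof
  define \<sigma> where "\<sigma> X = F (SOME u. u \<in> X)" for X
  show \<sigma>: "\<sigma> (theta P k w) = F w" if "w \<in> lists (alph P k)" for w
  proof -
    have "(SOME u. u \<in> theta P k w) \<in> theta P k w" using theta_self[OF that] by (rule someI)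
    then have "pc_eq P k w (SOME u. u \<in> theta P k w)" by (simp add: theta_def)
    then show ?thesis unfolding \<sigma>_def by (simp add: resp)
  qed
  show "\<sigma> \<in> hom (pc_group P k) H"
  proof (rule homI)
    fix x y assume "x \<in> carrier (pc_group P k)" "y \<in> carrier (pc_group P k)"
    then obtain u v where "u \<in> lists (alph P k)" "v \<in> lists (alph P k)"
      and "x = theta P k u" "y = theta P k v"
      by (auto simp: carrier_pc_group)
    then show "\<sigma> (x \<otimes>\<^bsub>pc_group P k\<^esub> y) = \<sigma> x \<otimes>\<^bsub>H\<^esub> \<sigma> y"
      by (simp add: theta_append [symmetric] \<sigma> F_append del: in_lists_conv_set)
  qed (simp add: \<sigma>_def F_in_carrier)
qed

lemma take2_drop_eq_iff:
  "take 2 (drop p w) = [a, b] \<longleftrightarrow> Suc p < length w \<and> w ! p = a \<and> w ! Suc p = b"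
proof (cases "Suc p < length w")
  case True
  then have "drop p w = w ! p # w ! Suc p # drop (Suc (Suc p)) w"
    by (metis Cons_nth_drop_Suc Suc_lessD)
  then show ?thesis using True by simp
next
  case False
  then have "length (take 2 (drop p w)) < 2" by simp
  with False show ?thesis by (metis length_Cons list.size(3) numeral_2_eq_2 order_less_irrefl)
qed

lemma take1_drop_eq_iff: "take (Suc 0) (drop p w) = [a] \<longleftrightarrow> p < length w \<and> w ! p = a"
  by (cases "p < length w") (auto simp: Cons_nth_drop_Suc [symmetric])

lemma take_drop_eq_replicate_iff:
  "p + t \<le> length w \<Longrightarrow> take t (drop p w) = replicate t c \<longleftrightarrow> (\<forall>k<t. w ! (p + k) = c)"
  by (auto simp: list_eq_iff_nth_eq)

lemma mem_cands_iff:
  "(m, p, q, l, rhs) \<in> cands P w \<longleftrightarrow> 1 \<le> m \<and> m \<le> pc_n P \<and>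
   ((q = 1 \<and> pc_r P m = enat l \<and> p + l \<le> length w \<and> (\<forall>k<l. w ! (p + k) = (m, True)) \<and>
       rhs = gvec P m (pc_e P m)) \<or>
    (\<exists>j. q = 2 \<and> l = 2 \<and> m < j \<and> j \<le> pc_n P \<and> Suc p < length w \<and>
       w ! p = (j, True) \<and> w ! Suc p = (m, True) \<and> rhs = (m, True) # gvec P m (pc_a P m j)) \<or>
    (\<exists>j. q = 3 \<and> l = 2 \<and> m < j \<and> j \<le> pc_n P \<and> Suc p < length w \<and> pc_r P m = \<infinity> \<and>
       w ! p = (j, True) \<and> w ! Suc p = (m, False) \<and> rhs = (m, False) # gvec P m (pc_b P m j)) \<or>
    (\<exists>j. q = 4 \<and> l = 2 \<and> m < j \<and> j \<le> pc_n P \<and> Suc p < length w \<and> pc_r P j = \<infinity> \<and>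
       w ! p = (j, False) \<and> w ! Suc p = (m, True) \<and> rhs = (m, True) # gvec P m (pc_c P m j)) \<or>
    (\<exists>j. q = 5 \<and> l = 2 \<and> m < j \<and> j \<le> pc_n P \<and> Suc p < length w \<and>
       pc_r P m = \<infinity> \<and> pc_r P j = \<infinity> \<and>
       w ! p = (j, False) \<and> w ! Suc p = (m, False) \<and> rhs = (m, False) # gvec P m (pc_d P m j)) \<or>
    (\<exists>t. q = 6 \<and> l = 1 \<and> p < length w \<and> pc_r P m = enat t \<and> w ! p = (m, False) \<and>
       rhs = replicate (t - 1) (m, True) @ gvec P m (pc_f P m)) \<or>
    (\<exists>s. q = 7 \<and> l = 2 \<and> Suc p < length w \<and> w ! p = (m, s) \<and> w ! Suc p = (m, \<not> s) \<and> rhs = []))"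
  (is "?L \<longleftrightarrow> ?R")
proof
  assume ?L
  then show ?R unfolding cands_def
    by (elim UnE CollectE exE conjE)
      (auto simp: take2_drop_eq_iff take1_drop_eq_iff take_drop_eq_replicate_iff)
next
  assume ?R
  then show ?L unfolding cands_def
    by (elim conjE disjE exE)
      (simp_all add: take2_drop_eq_iff take1_drop_eq_iff take_drop_eq_replicate_iff)
qed

lemma cands_unique:
  "(m, p, q, l1, r1) \<in> cands P w \<Longrightarrow> (m, p, q, l2, r2) \<in> cands P w \<Longrightarrow> l1 = l2 \<and> r1 = r2"
  unfolding mem_cands_iff by auto

lemma finite_cand_keys: "finite ((\<lambda>(m, p, q, l, rhs). (m, p, q)) ` cands P w)"
proof (rule finite_subset)
  show "(\<lambda>(m, p, q, l, rhs). (m, p, q)) ` cands P w \<subseteq> {..pc_n P} \<times> {..length w} \<times> {..(7::nat)}"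
    by (clarsimp simp: mem_cands_iff) auto
qed auto

lemma collect_step_SomeD:
  assumes "collect_step P w = Some w'"
  obtains m p q l rhs where "(m, p, q, l, rhs) \<in> cands P w" and "w' = take p w @ rhs @ drop (p + l) w"
proof -
  let ?K = "(\<lambda>(m, p, q, l, rhs). (m, p, q)) ` cands P w"
  have ne: "cands P w \<noteq> {}" using assms by (auto simp: collect_step_def split: if_splits)
  obtain m p q where mn: "Min ?K = (m, p, q)" by (metis prod_cases3)
  have "(m, p, q) \<in> ?K" using mn[symmetric] finite_cand_keys ne by (metis Min_in image_is_empty)
  then obtain l rhs where c: "(m, p, q, l, rhs) \<in> cands P w" by auto
  have "(THE lr. (m, p, q, fst lr, snd lr) \<in> cands P w) = (l, rhs)"
    by (rule the_equality) (use c cands_unique in auto)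
  with ne mn have "collect_step P w = Some (take p w @ rhs @ drop (p + l) w)"
    unfolding collect_step_def by simp
  with assms c show thesis by (intro that) auto
qed

lemma collect_step_eqI:
  assumes c: "(m, p, q, l, rhs) \<in> cands P w"
    and min: "\<And>m' p' q' l' r'. (m', p', q', l', r') \<in> cands P w \<Longrightarrow> (m, p, q) \<le> (m', p', q')"
  shows "collect_step P w = Some (take p w @ rhs @ drop (p + l) w)"
proof -
  let ?K = "(\<lambda>(m, p, q, l, rhs). (m, p, q)) ` cands P w"
  have "Min ?K = (m, p, q)"
    by (rule Min_eqI) (use finite_cand_keys c min in force)+
  moreover have "(THE lr. (m, p, q, fst lr, snd lr) \<in> cands P w) = (l, rhs)"
    by (rule the_equality) (use c cands_unique in auto)
  ultimately show ?thesis using c unfolding collect_step_def by auto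
qed

lemma collect_step_None_iff: "collect_step P w = None \<longleftrightarrow> cands P w = {}"
  by (auto simp: collect_step_def split: prod.splits)

lemma Suc_mem_cands_Cons_iff:
  "(m, Suc p, q, l, rhs) \<in> cands P (a # w) \<longleftrightarrow> (m, p, q, l, rhs) \<in> cands P w"
  by (auto simp: mem_cands_iff)

lemma cands_Cons_empty:
  assumes "cands P (a # w) = {}"
  shows "cands P w = {}"
proof (rule equals0I)
  fix c assume "c \<in> cands P w"
  moreover obtain m p q l rhs where "c = (m, p, q, l, rhs)" by (cases c)
  ultimately have "(m, Suc p, q, l, rhs) \<in> cands P (a # w)" by (simp add: Suc_mem_cands_Cons_iff)
  with assms show False by simp
qed

lemma cands_cases:
  assumes "(m, p, q, l, rhs) \<in> cands P w"
  obtains (power) "pc_r P m = enat l" "p + l \<le> length w" "\<forall>k<l. w ! (p + k) = (m, True)"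
    "rhs = gvec P m (pc_e P m)" "q = 1"
  | (conj_a) j where "l = 2" "m < j" "j \<le> pc_n P" "Suc p < length w"
    "w ! p = (j, True)" "w ! Suc p = (m, True)" "rhs = (m, True) # gvec P m (pc_a P m j)" "q = 2"
  | (conj_b) j where "l = 2" "m < j" "j \<le> pc_n P" "Suc p < length w" "pc_r P m = \<infinity>"
    "w ! p = (j, True)" "w ! Suc p = (m, False)" "rhs = (m, False) # gvec P m (pc_b P m j)" "q = 3"
  | (conj_c) j where "l = 2" "m < j" "j \<le> pc_n P" "Suc p < length w" "pc_r P j = \<infinity>"
    "w ! p = (j, False)" "w ! Suc p = (m, True)" "rhs = (m, True) # gvec P m (pc_c P m j)" "q = 4"
  | (conj_d) j where "l = 2" "m < j" "j \<le> pc_n P" "Suc p < length w"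
    "pc_r P m = \<infinity>" "pc_r P j = \<infinity>"
    "w ! p = (j, False)" "w ! Suc p = (m, False)" "rhs = (m, False) # gvec P m (pc_d P m j)" "q = 5"
  | (inverse) t where "l = 1" "p < length w" "pc_r P m = enat t" "w ! p = (m, False)"
    "rhs = replicate (t - 1) (m, True) @ gvec P m (pc_f P m)" "q = 6"
  | (cancel) s where "l = 2" "Suc p < length w" "w ! p = (m, s)" "w ! Suc p = (m, \<not> s)" "rhs = []" "q = 7"
  using assms unfolding mem_cands_iff by (elim conjE disjE exE) (rule that; assumption)+

abbreviation collect_step_rel :: "pcp \<Rightarrow> word \<Rightarrow> word \<Rightarrow> bool" where
  "collect_step_rel P x y \<equiv> collect_step P x = Some y"

section \<open>Termination of collection\<close>

definition letter_rank :: "letter \<Rightarrow> nat" where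
  "letter_rank a = 2 * fst a + (if snd a then 1 else 0)"

fun split_at_rank :: "nat \<Rightarrow> word \<Rightarrow> word list" where
  "split_at_rank k [] = [[]]"
| "split_at_rank k (a # w) =
    (if letter_rank a = k then [] # split_at_rank k w
     else (a # hd (split_at_rank k w)) # tl (split_at_rank k w))"

lemma split_at_rank_not_Nil [simp]: "split_at_rank k w \<noteq> []"
  by (induction w) auto

lemma length_split_at_rank:
  "length (split_at_rank k w) = Suc (length (filter (\<lambda>a. letter_rank a = k) w))"
proof (induction w)
  case (Cons a w)
  then show ?case using split_at_rank_not_Nil[of k w] by (cases "split_at_rank k w") auto
qed simp

lemma split_at_rank_append:
  "split_at_rank k (u @ v) =
     butlast (split_at_rank k u) @ [last (split_at_rank k u) @ hd (split_at_rank k v)] @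
     tl (split_at_rank k v)"
proof (induction u)
  case Nil
  then show ?case using split_at_rank_not_Nil[of k v] by (cases "split_at_rank k v") auto
next
  case (Cons a u)
  obtain x xs where "split_at_rank k u = x # xs"
    using split_at_rank_not_Nil[of k u] by (cases "split_at_rank k u") auto
  with Cons show ?case by (cases "xs = []") auto
qed

lemma split_at_absent_rank: "\<forall>a\<in>set w. letter_rank a \<noteq> k \<Longrightarrow> split_at_rank k w = [w]"
  by (induction w) auto

(* rank_order B d compares words first by their number of letters of rank B - d and then
   lexicographically by the segments between these letters, using rank_order B (d - 1).
   A collection step either removes a letter of the smallest rank it touches, introducing only
   letters of larger rank, or moves such a letter to the left; both decrease the word in
   rank_order B B once B exceeds all ranks. *)
fun rank_order :: "nat \<Rightarrow> nat \<Rightarrow> (word \<times> word) set" where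
  "rank_order B 0 = {}"
| "rank_order B (Suc d) = inv_image (lenlex (rank_order B d)) (split_at_rank (B - Suc d))"

lemma wf_rank_order: "wf (rank_order B d)"
  by (induction d) auto

lemma rank_order_append_left: "(v, u) \<in> rank_order B d \<Longrightarrow> (x @ v, x @ u) \<in> rank_order B d"
proof (induction d arbitrary: x v u)
  case (Suc d)
  define k where "k = B - Suc d"
  have h: "(split_at_rank k v, split_at_rank k u) \<in> lenlex (rank_order B d)"
    using Suc.prems by (simp add: k_def)
  have "(split_at_rank k (x @ v), split_at_rank k (x @ u)) \<in> lenlex (rank_order B d)"
  proof (cases "length (split_at_rank k v) < length (split_at_rank k u)")
    case True
    then show ?thesis by (simp add: lenlex_conv length_split_at_rank)
  next
    case False
    with h obtain xys a b xs' ys' where sv: "split_at_rank k v = xys @ a # xs'"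
      and su: "split_at_rank k u = xys @ b # ys'"
      and ab: "(a, b) \<in> rank_order B d" and len: "length xs' = length ys'"
      by (auto simp: lenlex_conv lex_conv)
    show ?thesis
    proof (cases xys)
      case Nil
      have "(last (split_at_rank k x) @ a, last (split_at_rank k x) @ b) \<in> rank_order B d"
        using Suc.IH ab by blast
      then show ?thesis using sv su Nil len
        by (simp add: split_at_rank_append lenlex_conv lex_conv) (metis append.assoc)
    next
      case (Cons c xys')
      then show ?thesis using sv su len ab
        by (simp add: split_at_rank_append lenlex_conv lex_conv) (metis append.assoc append_Cons)
    qed
  qed
  then show ?case by (simp add: k_def)
qed simp

lemma rank_order_append_right: "(v, u) \<in> rank_order B d \<Longrightarrow> (v @ y, u @ y) \<in> rank_order B d"
proof (induction d arbitrary: y v u)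
  case (Suc d)
  define k where "k = B - Suc d"
  have h: "(split_at_rank k v, split_at_rank k u) \<in> lenlex (rank_order B d)"
    using Suc.prems by (simp add: k_def)
  define H where "H = hd (split_at_rank k y)"
  define T where "T = tl (split_at_rank k y)"
  have "(split_at_rank k (v @ y), split_at_rank k (u @ y)) \<in> lenlex (rank_order B d)"
  proof (cases "length (split_at_rank k v) < length (split_at_rank k u)")
    case True
    then show ?thesis by (simp add: lenlex_conv length_split_at_rank)
  next
    case False
    with h obtain xys a b xs' ys' where sv: "split_at_rank k v = xys @ a # xs'"
      and su: "split_at_rank k u = xys @ b # ys'"
      and ab: "(a, b) \<in> rank_order B d" and len: "length xs' = length ys'"
      by (auto simp: lenlex_conv lex_conv)
    show ?thesis
    proof (cases "xs' = []")
      case True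
      with len have "ys' = []" by simp
      with True sv su have "split_at_rank k (v @ y) = xys @ (a @ H) # T"
        and "split_at_rank k (u @ y) = xys @ (b @ H) # T"
        by (simp_all add: split_at_rank_append H_def T_def)
      moreover have "(a @ H, b @ H) \<in> rank_order B d" using Suc.IH ab by blast
      ultimately show ?thesis by (auto simp: lenlex_conv lex_conv)
    next
      case False
      with len have "ys' \<noteq> []" by auto
      with False sv su
      have "split_at_rank k (v @ y) = xys @ a # (butlast xs' @ (last xs' @ H) # T)"
        and "split_at_rank k (u @ y) = xys @ b # (butlast ys' @ (last ys' @ H) # T)"
        by (simp_all add: split_at_rank_append H_def T_def butlast_append)
      with ab len show ?thesis by (auto simp: lenlex_conv lex_conv)
    qed
  qed
  then show ?case by (simp add: k_def)
qed simp

lemma rank_order_context: "(v, u) \<in> rank_order B d \<Longrightarrow> (x @ v @ y, x @ u @ y) \<in> rank_order B d"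
  using rank_order_append_left rank_order_append_right by blast

lemma rank_order_mono:
  assumes "(v, u) \<in> rank_order B d" "d \<le> d'" "d' \<le> B" "\<forall>a\<in>set v \<union> set u. B - d \<le> letter_rank a"
  shows "(v, u) \<in> rank_order B d'"
  using assms(2-3)
proof (induction d')
  case (Suc d'')
  show ?case
  proof (cases "d = Suc d''")
    case False
    with Suc have "(v, u) \<in> rank_order B d''" by simp
    moreover have "letter_rank a \<noteq> B - Suc d''" if "a \<in> set v \<union> set u" for a
    proof -
      have "B - d \<le> letter_rank a" using assms(4) that by blast
      with False Suc.prems show ?thesis by linarith
    qed
    ultimately show ?thesis
      by (simp add: split_at_absent_rank lenlex_conv lex_conv) (metis append.left_neutral UnCI)
  qed (use assms(1) in simp)
qed (use assms(1) in simp)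

lemma rank_order_Nil:
  "w \<noteq> [] \<Longrightarrow> \<forall>a\<in>set w. B - d \<le> letter_rank a \<and> letter_rank a < B \<Longrightarrow> ([], w) \<in> rank_order B d"
proof (induction d)
  case 0
  then show ?case by (cases w) auto
next
  case (Suc d)
  show ?case
  proof (cases "\<exists>a\<in>set w. letter_rank a = B - Suc d")
    case True
    then have "filter (\<lambda>a. letter_rank a = B - Suc d) w \<noteq> []" by (auto simp: filter_empty_conv)
    then show ?thesis by (simp add: lenlex_conv length_split_at_rank)
  next
    case False
    with Suc have "([], w) \<in> rank_order B d" by fastforce
    with False show ?thesis
      by (simp add: split_at_absent_rank lenlex_conv lex_conv) (metis append.left_neutral)
  qed
qed

lemma rank_orderI:
  assumes "k < B" "(split_at_rank k v, split_at_rank k u) \<in> lenlex (rank_order B (B - Suc k))"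
    "\<forall>a\<in>set v \<union> set u. k \<le> letter_rank a"
  shows "(v, u) \<in> rank_order B B"
proof -
  have "B - Suc (B - Suc k) = k" using assms(1) by simp
  with assms(2) have "(v, u) \<in> rank_order B (Suc (B - Suc k))" by simp
  then show ?thesis by (rule rank_order_mono) (use assms in auto)
qed

lemma rank_order_remove_rank:
  assumes "k < B" "\<forall>a\<in>set v. k < letter_rank a" "\<forall>a\<in>set u. k \<le> letter_rank a"
    "\<exists>a\<in>set u. letter_rank a = k"
  shows "(v, u) \<in> rank_order B B"
proof (rule rank_orderI[OF assms(1)])
  have "filter (\<lambda>a. letter_rank a = k) v = []" "filter (\<lambda>a. letter_rank a = k) u \<noteq> []"
    using assms(2,4) by (auto simp: filter_empty_conv)
  then show "(split_at_rank k v, split_at_rank k u) \<in> lenlex (rank_order B (B - Suc k))"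
    by (simp add: lenlex_conv length_split_at_rank)
qed (use assms(2,3) in fastforce)

lemma rank_order_swap:
  assumes "letter_rank b < letter_rank c" "letter_rank c < B"
    and "\<forall>a\<in>set r. letter_rank b < letter_rank a \<and> letter_rank a < B"
  shows "(b # r, [c, b]) \<in> rank_order B B"
proof (rule rank_orderI)
  have "([], [c]) \<in> rank_order B (B - Suc (letter_rank b))"
    by (rule rank_order_Nil) (use assms in auto)
  moreover have "split_at_rank (letter_rank b) r = [r]"
    using assms(3) by (intro split_at_absent_rank) auto
  ultimately show "(split_at_rank (letter_rank b) (b # r), split_at_rank (letter_rank b) [c, b])
      \<in> lenlex (rank_order B (B - Suc (letter_rank b)))"
    using assms by (simp add: lenlex_conv lex_conv) (metis append.left_neutral)
qed (use assms in auto)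

lemma swap_decreases:
  assumes "l = 2" "m < j" "j \<le> pc_n P" "Suc p < length w" "w ! p = (j, sj)" "w ! Suc p = (m, sm)"
    and "rhs = (m, sm) # gvec P m v"
  shows "(rhs, take l (drop p w)) \<in> rank_order (2 * pc_n P + 2) (2 * pc_n P + 2)"
proof -
  have lhs: "take l (drop p w) = [(j, sj), (m, sm)]" using assms by (simp add: take2_drop_eq_iff)
  show ?thesis unfolding assms(7) lhs
    by (rule rank_order_swap)
      (use assms in \<open>auto simp: letter_rank_def dest!: letter_in_gvec\<close>)
qed

lemma cand_decreases:
  assumes valid: "pcp_valid P" and c: "(m, p, q, l, rhs) \<in> cands P w"
  shows "(rhs, take l (drop p w)) \<in> rank_order (2 * pc_n P + 2) (2 * pc_n P + 2)"
proof -
  have m: "1 \<le> m" "m \<le> pc_n P" using c by (auto simp: mem_cands_iff)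
  from c show ?thesis
  proof (cases rule: cands_cases)
    case power
    with valid m have "l \<noteq> 0" using relative_order_nonzero by fastforce
    moreover from power have "take l (drop p w) = replicate l (m, True)"
      by (simp add: take_drop_eq_replicate_iff)
    ultimately show ?thesis using power m
      by (intro rank_order_remove_rank[of "2 * m + 1"]) (auto simp: letter_rank_def dest!: letter_in_gvec)
  next
    case (inverse t)
    then have "take l (drop p w) = [(m, False)]" by (simp add: take1_drop_eq_iff)
    with inverse m show ?thesis
      by (intro rank_order_remove_rank[of "2 * m"]) (auto simp: letter_rank_def dest!: letter_in_gvec)
  next
    case (cancel s)
    then have "take l (drop p w) = [(m, s), (m, \<not> s)]" by (simp add: take2_drop_eq_iff)
    moreover have "([], [(m, s), (m, \<not> s)]) \<in> rank_order (2 * pc_n P + 2) (2 * pc_n P + 2)"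
      by (rule rank_order_Nil) (use m in \<open>auto simp: letter_rank_def\<close>)
    ultimately show ?thesis using cancel by simp
  next
    case (conj_a j)
    show ?thesis by (rule swap_decreases[OF conj_a(1-7)])
  next
    case (conj_b j)
    show ?thesis by (rule swap_decreases[OF conj_b(1-4,6-8)])
  next
    case (conj_c j)
    show ?thesis by (rule swap_decreases[OF conj_c(1-4,6-8)])
  next
    case (conj_d j)
    show ?thesis by (rule swap_decreases[OF conj_d(1-4,7-9)])
  qed
qed

lemma collect_step_decreases:
  assumes "pcp_valid P" and "collect_step P w = Some w'"
  shows "(w', w) \<in> rank_order (2 * pc_n P + 2) (2 * pc_n P + 2)"
proof -
  obtain m p q l rhs where c: "(m, p, q, l, rhs) \<in> cands P w"
    and w': "w' = take p w @ rhs @ drop (p + l) w"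
    using collect_step_SomeD[OF assms(2)] by blast
  have w: "take p w @ take l (drop p w) @ drop (p + l) w = w"
    by (metis append_take_drop_id drop_drop add.commute)
  from cand_decreases[OF assms(1) c]
  have "(take p w @ rhs @ drop (p + l) w, take p w @ take l (drop p w) @ drop (p + l) w)
      \<in> rank_order (2 * pc_n P + 2) (2 * pc_n P + 2)"
    by (rule rank_order_context)
  then show ?thesis by (simp only: w w')
qed

lemma collect_step_terminates:
  assumes "pcp_valid P"
  shows "\<exists>v. (collect_step_rel P)\<^sup>*\<^sup>* w v \<and> collect_step P v = None"
proof (induction w rule: wf_induct[OF wf_rank_order[of "2 * pc_n P + 2" "2 * pc_n P + 2"]])
  case (1 w)
  show ?case
  proof (cases "collect_step P w")
    case (Some w')
    with 1 obtain v where "(collect_step_rel P)\<^sup>*\<^sup>* w' v" "collect_step P v = None"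
      using collect_step_decreases[OF assms] by blast
    with Some show ?thesis by (meson converse_rtranclp_into_rtranclp)
  qed blast
qed

lemma collect_step_normal_form_unique:
  "(collect_step_rel P)\<^sup>*\<^sup>* w v \<Longrightarrow> collect_step P v = None \<Longrightarrow>
   (collect_step_rel P)\<^sup>*\<^sup>* w v' \<Longrightarrow> collect_step P v' = None \<Longrightarrow> v = v'"
proof (induction arbitrary: v' rule: converse_rtranclp_induct)
  case base
  then show ?case by (auto elim: converse_rtranclpE)
next
  case (step y z)
  from step.prems(2) show ?case
  proof (cases rule: converse_rtranclpE)
    case base
    with step.prems(3) step.hyps(1) show ?thesis by simp
  next
    case (step z')
    with \<open>collect_step P y = Some z\<close> have "(collect_step_rel P)\<^sup>*\<^sup>* z v'" by simp
    with step.IH step.prems show ?thesis by blast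
  qed
qed

lemma collect_eqI:
  "pcp_valid P \<Longrightarrow> (collect_step_rel P)\<^sup>*\<^sup>* w v \<Longrightarrow> collect_step P v = None \<Longrightarrow> collect P w = v"
  unfolding collect_def
  by (rule the_equality) (use collect_step_normal_form_unique in blast)+

lemma collect_step_collect:
  assumes "pcp_valid P" and "collect_step P w = Some w'"
  shows "collect P w = collect P w'"
proof -
  obtain v where v: "(collect_step_rel P)\<^sup>*\<^sup>* w' v" "collect_step P v = None"
    using collect_step_terminates[OF assms(1)] by blast
  with assms(2) have "(collect_step_rel P)\<^sup>*\<^sup>* w v" by (meson converse_rtranclp_into_rtranclp)
  with v show ?thesis using collect_eqI[OF assms(1)] by metis
qed

section \<open>Collection computes reduced words\<close>

definition reduced_word :: "pcp \<Rightarrow> nat \<Rightarrow> (nat \<Rightarrow> int) \<Rightarrow> word" where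
  "reduced_word P k x = concat (map (\<lambda>i. gpow i (x i)) [k..<Suc (pc_n P)])"

lemma reduced_from_def':
  "reduced_from P k w \<longleftrightarrow> (\<exists>x. w = reduced_word P k x \<and> (\<forall>i\<in>{k..pc_n P}. in_range P i (x i)))"
  by (simp add: reduced_from_def reduced_word_def)

lemma reduced_word_cong:
  "(\<And>i. k \<le> i \<Longrightarrow> i \<le> pc_n P \<Longrightarrow> x i = y i) \<Longrightarrow> reduced_word P k x = reduced_word P k y"
  unfolding reduced_word_def by (intro arg_cong[where f = concat] map_cong) auto

lemma reduced_word_zero: "(\<And>i. k \<le> i \<Longrightarrow> i < k' \<Longrightarrow> x i = 0) \<Longrightarrow> k \<le> k' \<Longrightarrow>
    k' \<le> Suc (pc_n P) \<Longrightarrow> reduced_word P k x = reduced_word P k' x"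
proof -
  assume zero: "\<And>i. k \<le> i \<Longrightarrow> i < k' \<Longrightarrow> x i = 0" and "k \<le> k'" "k' \<le> Suc (pc_n P)"
  then have "[k..<Suc (pc_n P)] = [k..<k'] @ [k'..<Suc (pc_n P)]"
    using upt_add_eq_append[of k k' "Suc (pc_n P) - k'"] by simp
  moreover have "concat (map (\<lambda>i. gpow i (x i)) [k..<k']) = []"
    using zero by (induction k') auto
  ultimately show ?thesis by (simp add: reduced_word_def)
qed

lemma reduced_word_Cons_gpow:
  "k \<le> pc_n P \<Longrightarrow> reduced_word P k x = gpow k (x k) @ reduced_word P (Suc k) x"
  unfolding reduced_word_def by (subst upt_conv_Cons) auto

lemma reduced_from_mono:
  assumes valid: "pcp_valid P" and "1 \<le> k" "k \<le> k'" "k' \<le> Suc (pc_n P)" and "reduced_from P k' w"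
  shows "reduced_from P k w"
proof -
  obtain x where x: "w = reduced_word P k' x" "\<forall>i\<in>{k'..pc_n P}. in_range P i (x i)"
    using assms(5) by (auto simp: reduced_from_def')
  define y where "y = (\<lambda>i. if i < k' then 0 else x i)"
  have "w = reduced_word P k y"
    using x(1) assms(3,4) reduced_word_zero[of k k' y P] reduced_word_cong[of k' P x y]
    by (simp add: y_def)
  moreover have "\<forall>i\<in>{k..pc_n P}. in_range P i (y i)"
    using x(2) in_range_0[OF valid] assms(2) by (auto simp: y_def)
  ultimately show ?thesis by (auto simp: reduced_from_def')
qed

lemma cands_descent:
  assumes "Suc p < length w" "w ! p = (i, s)" "w ! Suc p = (k, s')" "1 \<le> k" "k < i" "i \<le> pc_n P"
  shows "cands P w \<noteq> {}"
proof -
  consider (inverse_right) t where "\<not> s'" "pc_r P k = enat t"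
    | (inverse_left) t where "\<not> s" "pc_r P i = enat t"
    | (swap) "s' \<or> pc_r P k = \<infinity>" "s \<or> pc_r P i = \<infinity>"
    by (cases "pc_r P k"; cases "pc_r P i") auto
  then show ?thesis
  proof cases
    case (inverse_right t)
    with assms have "(k, Suc p, 6, 1, replicate (t - 1) (k, True) @ gvec P k (pc_f P k)) \<in> cands P w"
      by (simp add: mem_cands_iff)
    then show ?thesis by blast
  next
    case (inverse_left t)
    with assms have "(i, p, 6, 1, replicate (t - 1) (i, True) @ gvec P i (pc_f P i)) \<in> cands P w"
      by (simp add: mem_cands_iff)
    then show ?thesis by blast
  next
    case swap
    with assms have "\<exists>q rhs. (k, p, q, 2, rhs) \<in> cands P w"
      by (cases s; cases s') (auto simp: mem_cands_iff)
    then show ?thesis by blast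
  qed
qed

lemma reduced_word_from_head:
  "k \<le> i \<Longrightarrow> i \<le> pc_n P \<Longrightarrow> (\<And>j. k \<le> j \<Longrightarrow> j < i \<Longrightarrow> x j = 0) \<Longrightarrow>
   reduced_word P k x = gpow i (x i) @ reduced_word P (Suc i) x"
  using reduced_word_zero[of k i x P] reduced_word_Cons_gpow[of i P x] by simp

lemma reduced_word_Cons:
  assumes "k \<le> i" "i \<le> pc_n P" "\<And>j. k \<le> j \<Longrightarrow> j < i \<Longrightarrow> x j = 0"
    and "if s then 0 \<le> x i else x i \<le> 0"
  shows "(i, s) # reduced_word P k x = reduced_word P k (x(i := if s then x i + 1 else x i - 1))"
    (is "_ = reduced_word P k ?y")
proof -
  have "gpow i (?y i) = (i, s) # gpow i (x i)"
    using assms(4) by (auto simp: gpow_add_one gpow_diff_one)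
  moreover have "reduced_word P (Suc i) ?y = reduced_word P (Suc i) x"
    by (rule reduced_word_cong) simp
  ultimately show ?thesis
    using assms(1-3) reduced_word_from_head[of k i P x] reduced_word_from_head[of k i P ?y] by simp
qed

lemma no_cands_Cons_vanishes_below:
  assumes "1 \<le> k" "i \<le> pc_n P" "cands P ((i, s) # reduced_word P k x) = {}"
    and "k \<le> j" "j < i"
  shows "x j = 0"
proof (rule ccontr)
  assume "x j \<noteq> 0"
  define j0 where "j0 = (LEAST j. k \<le> j \<and> j < i \<and> x j \<noteq> 0)"
  have j0: "k \<le> j0" "j0 < i" "x j0 \<noteq> 0"
    using LeastI[of "\<lambda>j. k \<le> j \<and> j < i \<and> x j \<noteq> 0" j] assms \<open>x j \<noteq> 0\<close>
    unfolding j0_def by auto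
  have "x j' = 0" if "k \<le> j'" "j' < j0" for j'
    using not_less_Least[of j' "\<lambda>j. k \<le> j \<and> j < i \<and> x j \<noteq> 0"] that j0(2)
    unfolding j0_def by fastforce
  then obtain rest where "reduced_word P k x = (j0, 0 \<le> x j0) # rest"
    using reduced_word_from_head[of k j0 P x] gpow_Cons[OF j0(3)] j0 assms(2) by simp
  then have "cands P ((i, s) # reduced_word P k x) \<noteq> {}"
    using j0 assms(1) assms(2) by (intro cands_descent[of 0 _ i s j0 "0 \<le> x j0"]) auto
  with assms(3) show False by simp
qed

lemma no_cands_gpow_sign:
  assumes "1 \<le> i" "i \<le> pc_n P" and none: "cands P ((i, s) # gpow i x @ R) = {}"
  shows "if s then 0 \<le> x else x \<le> 0"
proof (rule ccontr)
  assume "\<not> ?thesis"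
  then have "x \<noteq> 0" "s \<noteq> (0 \<le> x)" by (auto split: if_splits)
  then have "(i, 0, 7, 2, []) \<in> cands P ((i, s) # gpow i x @ R)"
    using gpow_Cons[of x i] assms(1,2) by (auto simp: mem_cands_iff)
  with none show False by simp
qed

lemma no_cands_gpow_in_range:
  assumes "1 \<le> i" "i \<le> pc_n P" and none: "cands P ((i, s) # gpow i x @ R) = {}"
    and "in_range P i x"
  shows "in_range P i (if s then x + 1 else x - 1)"
proof (cases s)
  case False
  have "pc_r P i = \<infinity>"
  proof (rule ccontr)
    assume "pc_r P i \<noteq> \<infinity>"
    then obtain t where "pc_r P i = enat t" by auto
    with False assms(1,2) have "(i, 0, 6, 1, replicate (t - 1) (i, True) @ gvec P i (pc_f P i))
        \<in> cands P ((i, s) # gpow i x @ R)"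
      by (simp add: mem_cands_iff)
    with none show False by simp
  qed
  with False show ?thesis by (simp add: in_range_def)
next
  case True
  have "x + 1 < int t" if t: "pc_r P i = enat t" for t
  proof (rule ccontr)
    assume "\<not> ?thesis"
    moreover have "0 \<le> x" "x < int t" using assms(4) t by (auto simp: in_range_def)
    ultimately have "t = Suc (nat x)" by linarith
    with True have w: "(i, s) # gpow i x @ R = replicate t (i, True) @ R"
      by (simp add: gpow_def \<open>0 \<le> x\<close>)
    from t assms(1,2) have "(i, 0, 1, t, gvec P i (pc_e P i)) \<in> cands P (replicate t (i, True) @ R)"
      by (simp add: mem_cands_iff nth_append)
    with none[unfolded w] show False by simp
  qed
  with True assms(4) show ?thesis by (simp add: in_range_def)
qed

lemma no_cands_Cons_reduced:
  assumes valid: "pcp_valid P" and i: "1 \<le> k" "k \<le> i" "i \<le> pc_n P"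
    and x: "\<forall>j\<in>{k..pc_n P}. in_range P j (x j)"
    and none: "cands P ((i, s) # reduced_word P k x) = {}"
  shows "reduced_from P k ((i, s) # reduced_word P k x)"
proof -
  have below: "x j = 0" if "k \<le> j" "j < i" for j
    using no_cands_Cons_vanishes_below[OF i(1) i(3) none that] .
  with i have "reduced_word P k x = gpow i (x i) @ reduced_word P (Suc i) x"
    by (intro reduced_word_from_head) simp_all
  with none have none': "cands P ((i, s) # gpow i (x i) @ reduced_word P (Suc i) x) = {}" by simp
  have sign: "if s then 0 \<le> x i else x i \<le> 0"
    by (rule no_cands_gpow_sign[OF _ i(3) none']) (use i in simp)
  have "in_range P i (if s then x i + 1 else x i - 1)"
    by (rule no_cands_gpow_in_range[OF _ i(3) none']) (use i x in auto)
  with x have "\<forall>j\<in>{k..pc_n P}. in_range P j ((x(i := if s then x i + 1 else x i - 1)) j)"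
    by (cases s) auto
  with reduced_word_Cons[of k i P x s, OF i(2,3) below sign] show ?thesis
    unfolding reduced_from_def' by metis
qed

lemma no_cands_reduced:
  assumes valid: "pcp_valid P" and "1 \<le> k" and "w \<in> lists (alph P k)" and "cands P w = {}"
  shows "reduced_from P k w"
  using assms(3,4)
proof (induction w rule: list.induct)
  case Nil
  have "[] = reduced_word P k (\<lambda>_. 0)" by (simp add: reduced_word_def concat_eq_Nil_conv)
  moreover have "\<forall>i\<in>{k..pc_n P}. in_range P i 0" using in_range_0[OF valid] assms(2) by auto
  ultimately show ?case unfolding reduced_from_def' by blast
next
  case (Cons a w)
  obtain i s where a: "a = (i, s)" by (cases a)
  have "(i, s) \<in> alph P k" using Cons.prems(1) a by simp
  then have i: "k \<le> i" "i \<le> pc_n P" by (auto simp: alph_def)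
  from Cons have "reduced_from P k w" using cands_Cons_empty by auto
  then obtain x where "w = reduced_word P k x" "\<forall>j\<in>{k..pc_n P}. in_range P j (x j)"
    by (auto simp: reduced_from_def')
  with Cons.prems show ?case
    using no_cands_Cons_reduced[OF valid assms(2) i] a by simp
qed

definition derived_relations_hold :: "pcp \<Rightarrow> nat \<Rightarrow> bool" where
  "derived_relations_hold P k \<longleftrightarrow>
     (\<forall>i j. k \<le> i \<and> i < j \<and> j \<le> pc_n P \<longrightarrow>
        (pc_r P j = \<infinity> \<longrightarrow> pc_eq P k [(j, False), (i, True)] ((i, True) # gvec P i (pc_c P i j))) \<and>
        (pc_r P i = \<infinity> \<and> pc_r P j = \<infinity> \<longrightarrow>
           pc_eq P k [(j, False), (i, False)] ((i, False) # gvec P i (pc_d P i j)))) \<and>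
     (\<forall>i t. k \<le> i \<and> i \<le> pc_n P \<and> pc_r P i = enat t \<longrightarrow>
        pc_eq P k [(i, False)] (replicate (t - 1) (i, True) @ gvec P i (pc_f P i)))"

lemma derived_relations_hold_2: "pcp_derived P \<Longrightarrow> derived_relations_hold P 2"
  unfolding derived_relations_hold_def pcp_derived_def by blast

lemma cand_pc_eq:
  assumes valid: "pcp_valid P" and w: "w \<in> lists (alph P k)" and dr: "derived_relations_hold P k"
    and c: "(m, p, q, l, rhs) \<in> cands P w"
  shows "pc_eq P k (take l (drop p w)) rhs"
  using c
proof (cases rule: cands_cases)
  case power
  with valid c have "l \<noteq> 0" using relative_order_nonzero by (fastforce simp: mem_cands_iff)
  with power have "w ! p = (m, True)" "p < length w" by (metis add.right_neutral not_gr_zero, linarith)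
  then have "k \<le> m" using nth_in_alph[OF w, of p] by simp
  with power c have "(take l (drop p w), rhs) \<in> rels P k"
    unfolding rels_def by (auto simp: take_drop_eq_replicate_iff mem_cands_iff)
  then show ?thesis by (rule pc_eq_relI)
next
  case (conj_a j)
  with nth_in_alph[OF w, of "Suc p"] have "(take l (drop p w), rhs) \<in> rels P k"
    unfolding rels_def by (auto simp: take2_drop_eq_iff)
  then show ?thesis by (rule pc_eq_relI)
next
  case (conj_b j)
  with nth_in_alph[OF w, of "Suc p"] have "(take l (drop p w), rhs) \<in> rels P k"
    unfolding rels_def by (auto simp: take2_drop_eq_iff)
  then show ?thesis by (rule pc_eq_relI)
next
  case (conj_c j)
  then have "take l (drop p w) = [(j, False), (m, True)]" by (simp add: take2_drop_eq_iff)
  with conj_c nth_in_alph[OF w, of "Suc p"] dr show ?thesis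
    by (auto simp: derived_relations_hold_def)
next
  case (conj_d j)
  then have "take l (drop p w) = [(j, False), (m, False)]" by (simp add: take2_drop_eq_iff)
  with conj_d nth_in_alph[OF w, of "Suc p"] dr show ?thesis
    by (auto simp: derived_relations_hold_def)
next
  case (inverse t)
  then have "take l (drop p w) = [(m, False)]" by (simp add: take1_drop_eq_iff)
  with inverse nth_in_alph[OF w, of p] dr show ?thesis
    by (auto simp: derived_relations_hold_def)
next
  case (cancel s)
  with nth_in_alph[OF w, of p] c have "(m, s) \<in> alph P k"
    by (auto simp: alph_def mem_cands_iff)
  then have "pc_eq P k ([] @ [(m, s), (m, \<not> s)] @ []) ([] @ [])"
    by (intro pc_eq.cancel) auto
  moreover have "take l (drop p w) = [(m, s), (m, \<not> s)]" using cancel by (simp add: take2_drop_eq_iff)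
  ultimately show ?thesis using cancel by simp
qed

lemma collect_step_pc_eq:
  assumes "pcp_valid P" "w \<in> lists (alph P k)" "derived_relations_hold P k"
    and "collect_step P w = Some w'"
  shows "pc_eq P k w w'"
proof -
  obtain m p q l rhs where c: "(m, p, q, l, rhs) \<in> cands P w"
    and w': "w' = take p w @ rhs @ drop (p + l) w"
    using collect_step_SomeD[OF assms(4)] by blast
  have "take p w \<in> lists (alph P k)" "drop (p + l) w \<in> lists (alph P k)"
    using assms(2) by (auto dest: in_set_takeD in_set_dropD)
  from pc_eq_context[OF cand_pc_eq[OF assms(1-3) c] this]
  have "pc_eq P k (take p w @ take l (drop p w) @ drop (p + l) w) w'" by (simp only: w')
  moreover have "take p w @ take l (drop p w) @ drop (p + l) w = w"
    by (metis append_take_drop_id drop_drop add.commute)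
  ultimately show ?thesis by simp
qed

lemma collect_steps_pc_eq:
  assumes "pcp_valid P" "w \<in> lists (alph P k)" "derived_relations_hold P k"
    and "(collect_step_rel P)\<^sup>*\<^sup>* w v"
  shows "pc_eq P k w v"
  using assms(4)
proof (induction rule: rtranclp_induct)
  case base
  then show ?case using assms(2) by (rule pc_eq.refl)
next
  case (step y z)
  then have "y \<in> lists (alph P k)" using pc_eq_in_lists by blast
  with step assms(1,3) show ?case by (metis collect_step_pc_eq pc_eq.trans)
qed

lemma collect_reduced:
  assumes valid: "pcp_valid P" and "1 \<le> k" and w: "w \<in> lists (alph P k)"
    and dr: "derived_relations_hold P k"
  shows "pc_eq P k w (collect P w)" and "reduced_from P k (collect P w)"
proof -
  obtain v where v: "(collect_step_rel P)\<^sup>*\<^sup>* w v" "collect_step P v = None"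
    using collect_step_terminates[OF valid] by blast
  then have "collect P w = v" by (rule collect_eqI[OF valid])
  moreover have "pc_eq P k w v" using collect_steps_pc_eq[OF valid w dr v(1)] .
  moreover have "reduced_from P k v"
    using no_cands_reduced[OF valid assms(2)] pc_eq_in_lists[OF \<open>pc_eq P k w v\<close>] v(2)
    by (simp add: collect_step_None_iff)
  ultimately show "pc_eq P k w (collect P w)" "reduced_from P k (collect P w)" by simp_all
qed

lemma consistent_reduced_unique:
  assumes "consistent_from P k" and "pc_eq P k u v" and "reduced_from P k u" "reduced_from P k v"
  shows "u = v"
proof -
  have "u \<in> lists (alph P k)" "v \<in> lists (alph P k)" using assms(2) pc_eq_in_lists by blast+
  moreover from this assms(2) have "theta P k u = theta P k v" by (simp add: theta_eq_iff)
  ultimately show ?thesis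
    using assms(1,3,4) theta_in_carrier unfolding consistent_from_def by metis
qed

lemma collect_eq_iff_pc_eq:
  assumes valid: "pcp_valid P" and der: "pcp_derived P" and cons: "consistent_from P 2"
    and "X1 \<in> lists (alph P 2)" "X2 \<in> lists (alph P 2)"
  shows "collect P X1 = collect P X2 \<longleftrightarrow> pc_eq P 2 X1 X2"
proof -
  note c1 = collect_reduced[OF valid one_le_numeral assms(4) derived_relations_hold_2[OF der]]
    and c2 = collect_reduced[OF valid one_le_numeral assms(5) derived_relations_hold_2[OF der]]
  show ?thesis
  proof
    assume "collect P X1 = collect P X2"
    with c1(1) c2(1) show "pc_eq P 2 X1 X2" by (metis pc_eq.sym pc_eq.trans)
  next
    assume "pc_eq P 2 X1 X2"
    with c1(1) c2(1) have "pc_eq P 2 (collect P X1) (collect P X2)"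
      by (meson pc_eq.sym pc_eq.trans)
    from consistent_reduced_unique[OF cons this c1(2) c2(2)] show "collect P X1 = collect P X2" .
  qed
qed

section \<open>Embedding H^[k] into H^[2]\<close>

definition level_embeds :: "pcp \<Rightarrow> nat \<Rightarrow> bool" where
  "level_embeds P k \<longleftrightarrow>
     (\<forall>u \<in> lists (alph P k). \<forall>v \<in> lists (alph P k). pc_eq P 2 u v \<longrightarrow> pc_eq P k u v)"

lemma pc_eq_conj_inv:
  assumes "pc_eq P k [(j, True), a] (a # A)" and "k \<le> j" "j \<le> pc_n P"
  shows "pc_eq P k [(j, False), a] (a # word_inv A)"
proof -
  interpret G: group "pc_group P k" by (rule group_pc_group)
  have a: "[a] \<in> lists (alph P k)" and A: "A \<in> lists (alph P k)"
    and j: "[(j, s)] \<in> lists (alph P k)" for s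
    using pc_eq_in_lists[OF assms(1)] assms(2,3) by (auto simp: alph_def)
  from A have A': "word_inv A \<in> lists (alph P k)" by (simp del: in_lists_conv_set)
  let ?x = "theta P k [(j, True)]" and ?b = "theta P k [a]" and ?c = "theta P k A"
  have "theta P k ([(j, True)] @ [a]) = theta P k ([a] @ A)" using assms(1) theta_eqI by simp
  then have "?x \<otimes>\<^bsub>pc_group P k\<^esub> ?b = ?b \<otimes>\<^bsub>pc_group P k\<^esub> ?c"
    by (simp only: theta_append[OF j a] theta_append[OF a A])
  then have "inv\<^bsub>pc_group P k\<^esub> ?x \<otimes>\<^bsub>pc_group P k\<^esub> ?b = ?b \<otimes>\<^bsub>pc_group P k\<^esub> inv\<^bsub>pc_group P k\<^esub> ?c"
    using a A j by (intro G.conj_inv_eq) (auto intro: theta_in_carrier simp del: in_lists_conv_set)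
  then have "theta P k ([(j, False)] @ [a]) = theta P k ([a] @ word_inv A)"
    unfolding theta_append[OF j a] theta_append[OF a A'] theta_word_inv[OF A]
      theta_inv_letter[OF assms(2,3)] .
  then show ?thesis using theta_eq_iff[of "[(j, False), a]" P k "a # word_inv A"] j a A' by simp
qed

lemma pc_eq_inv_power:
  assumes "pc_eq P k (replicate t (i, True)) E" and "t \<noteq> 0" and "k \<le> i" "i \<le> pc_n P"
  shows "pc_eq P k [(i, False)] (replicate (t - 1) (i, True) @ word_inv E)"
proof -
  interpret G: group "pc_group P k" by (rule group_pc_group)
  have i: "(i, True) \<in> alph P k" "[(i, False)] \<in> lists (alph P k)"
    and r: "replicate (t - 1) (i, True) \<in> lists (alph P k)" and E: "E \<in> lists (alph P k)"
    using assms(3,4) pc_eq_in_lists[OF assms(1)] by (auto simp: alph_def)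
  from E have E': "word_inv E \<in> lists (alph P k)" by (simp del: in_lists_conv_set)
  let ?b = "theta P k [(i, True)]"
  have "?b [^]\<^bsub>pc_group P k\<^esub> t = theta P k E"
    using assms(1) theta_eqI theta_replicate[OF i(1)] by metis
  then have "inv\<^bsub>pc_group P k\<^esub> ?b = ?b [^]\<^bsub>pc_group P k\<^esub> (t - 1) \<otimes>\<^bsub>pc_group P k\<^esub> inv\<^bsub>pc_group P k\<^esub> theta P k E"
    using i E assms(2) by (intro G.inv_eq_pow_mult_inv) (auto intro: theta_in_carrier simp del: in_lists_conv_set)
  then have "theta P k [(i, False)] = theta P k (replicate (t - 1) (i, True) @ word_inv E)"
    unfolding theta_append[OF r E'] theta_word_inv[OF E] theta_inv_letter[OF assms(3,4)]
      theta_replicate[OF i(1)] .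
  with i r E' show ?thesis by (simp add: theta_eq_iff del: in_lists_conv_set)
qed

lemma pc_eq_transfer_suffix:
  assumes emb: "level_embeds P (Suc i)" and "2 \<le> i"
    and "pc_eq P i u (x @ W')" and "pc_eq P 2 u (x @ W)"
    and "x \<in> lists (alph P i)" "W \<in> lists (alph P (Suc i))" "W' \<in> lists (alph P (Suc i))"
  shows "pc_eq P i u (x @ W)"
proof -
  have "x \<in> lists (alph P 2)" "W \<in> lists (alph P 2)" "W' \<in> lists (alph P 2)"
    using assms(2,5-7) lists_alph_mono[of 2 i] lists_alph_mono[of 2 "Suc i"] by simp_all
  moreover have "pc_eq P 2 (x @ W') (x @ W)"
    using pc_eq_level_mono[OF assms(3)] assms(2,4) by (meson pc_eq.sym pc_eq.trans)
  ultimately have "pc_eq P 2 W' W" using pc_eq_cancel_left by blast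
  with emb assms(6,7) have "pc_eq P (Suc i) W' W" by (simp add: level_embeds_def)
  then have "pc_eq P i (x @ W') (x @ W)" using assms(5) by (simp add: pc_eq_level_mono pc_eq_append_left)
  with assms(3) show ?thesis by (rule pc_eq.trans)
qed

lemma pc_eq_conj_inv_at_level:
  assumes emb: "level_embeds P (Suc i)" and i: "2 \<le> i" "i < j" "j \<le> pc_n P"
    and "pc_eq P i [(j, True), (i, s)] ((i, s) # gvec P i v)"
    and "pc_eq P 2 [(j, False), (i, s)] ([(i, s)] @ gvec P i v')"
  shows "pc_eq P i [(j, False), (i, s)] ((i, s) # gvec P i v')"
proof -
  have g: "gvec P i w \<in> lists (alph P (Suc i))" "word_inv (gvec P i w) \<in> lists (alph P (Suc i))" for w
    using gvec_in_lists[of "Suc i" i P] by simp_all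
  have "[(i, s)] \<in> lists (alph P i)" using i by (auto simp: alph_def)
  moreover have "pc_eq P i [(j, False), (i, s)] ([(i, s)] @ word_inv (gvec P i v))"
    using pc_eq_conj_inv[OF assms(5)] i by simp
  ultimately show ?thesis
    using pc_eq_transfer_suffix[OF emb i(1) _ assms(6) _ g] by simp
qed

lemma pc_eq_inv_at_level:
  assumes emb: "level_embeds P (Suc i)" and i: "2 \<le> i" "i \<le> pc_n P" "pc_r P i = enat t" "t \<noteq> 0"
    and "pc_eq P 2 [(i, False)] (replicate (t - 1) (i, True) @ gvec P i v)"
  shows "pc_eq P i [(i, False)] (replicate (t - 1) (i, True) @ gvec P i v)"
proof -
  have g: "gvec P i w \<in> lists (alph P (Suc i))" "word_inv (gvec P i w) \<in> lists (alph P (Suc i))" for w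
    using gvec_in_lists[of "Suc i" i P] by simp_all
  have "replicate (t - 1) (i, True) \<in> lists (alph P i)" using i by (auto simp: alph_def)
  moreover have "pc_eq P i (replicate t (i, True)) (gvec P i (pc_e P i))"
    by (rule pc_eq_relI) (use i in \<open>auto simp: rels_def\<close>)
  then have "pc_eq P i [(i, False)] (replicate (t - 1) (i, True) @ word_inv (gvec P i (pc_e P i)))"
    using pc_eq_inv_power i by simp
  ultimately show ?thesis
    using pc_eq_transfer_suffix[OF emb i(1) _ assms(6) _ g] by simp
qed

lemma derived_relations_holdI:
  assumes valid: "pcp_valid P" and der: "pcp_derived P" and "2 \<le> k"
    and emb: "\<And>i. k \<le> i \<Longrightarrow> i \<le> pc_n P \<Longrightarrow> level_embeds P (Suc i)"
  shows "derived_relations_hold P k"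
  unfolding derived_relations_hold_def
proof (intro conjI allI impI)
  fix i j assume ij: "k \<le> i \<and> i < j \<and> j \<le> pc_n P"
  then have i: "2 \<le> i" "i < j" "j \<le> pc_n P" and emb_i: "level_embeds P (Suc i)"
    using assms(3) emb by auto
  show "pc_eq P k [(j, False), (i, True)] ((i, True) # gvec P i (pc_c P i j))"
    if "pc_r P j = \<infinity>"
  proof -
    have "pc_eq P i [(j, True), (i, True)] ((i, True) # gvec P i (pc_a P i j))"
      by (rule pc_eq_relI) (use i in \<open>auto simp: rels_def\<close>)
    moreover have "pc_eq P 2 [(j, False), (i, True)] ([(i, True)] @ gvec P i (pc_c P i j))"
      using der i that unfolding pcp_derived_def by simp
    ultimately show ?thesis
      using pc_eq_conj_inv_at_level[OF emb_i i] pc_eq_level_mono ij by blast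
  qed
  show "pc_eq P k [(j, False), (i, False)] ((i, False) # gvec P i (pc_d P i j))"
    if "pc_r P i = \<infinity> \<and> pc_r P j = \<infinity>"
  proof -
    have "pc_eq P i [(j, True), (i, False)] ((i, False) # gvec P i (pc_b P i j))"
      by (rule pc_eq_relI) (use i that in \<open>auto simp: rels_def\<close>)
    moreover have "pc_eq P 2 [(j, False), (i, False)] ([(i, False)] @ gvec P i (pc_d P i j))"
      using der i that unfolding pcp_derived_def by simp
    ultimately show ?thesis
      using pc_eq_conj_inv_at_level[OF emb_i i] pc_eq_level_mono ij by blast
  qed
next
  fix i t assume it: "k \<le> i \<and> i \<le> pc_n P \<and> pc_r P i = enat t"
  then have "t \<noteq> 0" using relative_order_nonzero[OF valid, of i] assms(3) by (auto simp: zero_enat_def)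
  moreover have "pc_eq P 2 [(i, False)] (replicate (t - 1) (i, True) @ gvec P i (pc_f P i))"
    using der it assms(3) unfolding pcp_derived_def by simp
  ultimately have "pc_eq P i [(i, False)] (replicate (t - 1) (i, True) @ gvec P i (pc_f P i))"
    using pc_eq_inv_at_level[OF emb, of i t] it assms(3) by simp
  then show "pc_eq P k [(i, False)] (replicate (t - 1) (i, True) @ gvec P i (pc_f P i))"
    by (rule pc_eq_level_mono) (use it in simp)
qed

lemma level_embeds:
  assumes valid: "pcp_valid P" and der: "pcp_derived P" and cons: "consistent_from P 2"
  shows "2 \<le> k \<Longrightarrow> level_embeds P k"
proof (induction "Suc (pc_n P) - k" arbitrary: k rule: less_induct)
  case less
  show ?case
  proof (cases "k \<le> pc_n P")
    case False
    then have "alph P k = {}" by (auto simp: alph_def)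
    then show ?thesis by (simp add: level_embeds_def pc_eq.refl)
  next
    case True
    have dr: "derived_relations_hold P k"
      by (rule derived_relations_holdI[OF valid der]) (use less in auto)
    show ?thesis unfolding level_embeds_def
    proof (intro ballI impI)
      fix u v assume u: "u \<in> lists (alph P k)" and v: "v \<in> lists (alph P k)" and "pc_eq P 2 u v"
      have k: "1 \<le> k" "2 \<le> k" "k \<le> Suc (pc_n P)" using less.prems True by simp_all
      note cu = collect_reduced[OF valid k(1) u dr] and cv = collect_reduced[OF valid k(1) v dr]
      have "pc_eq P 2 (collect P u) (collect P v)"
        using \<open>pc_eq P 2 u v\<close> pc_eq_level_mono[OF cu(1) k(2)] pc_eq_level_mono[OF cv(1) k(2)]
        by (meson pc_eq.sym pc_eq.trans)
      moreover have "reduced_from P 2 (collect P u)" "reduced_from P 2 (collect P v)"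
        using reduced_from_mono[OF valid _ k(2,3)] cu(2) cv(2) by simp_all
      ultimately have "collect P u = collect P v" by (rule consistent_reduced_unique[OF cons])
      with cu(1) cv(1) show "pc_eq P k u v" by (metis pc_eq.sym pc_eq.trans)
    qed
  qed
qed

section \<open>Relations respected by theta_2 o tau\<close>

lemma tau_Nil [simp]: "tau P [] = []"
  and tau_Cons [simp]: "tau P ((j, s) # w) =
    (if s then gvec P 1 (pc_a P 1 j) else gvec P 1 (pc_c P 1 j)) @ tau P w"
  and tau_append [simp]: "tau P (u @ v) = tau P u @ tau P v"
  by (simp_all add: tau_def)

lemma tau_in_lists: "tau P w \<in> lists (alph P 2)"
proof (induction w)
  case (Cons a w)
  then show ?case using gvec_in_lists[of 2 1 P] by (cases a) (simp del: in_lists_conv_set)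
qed simp

definition theta_tau :: "pcp \<Rightarrow> word \<Rightarrow> word set" where
  "theta_tau P w = theta P 2 (tau P w)"

lemma theta_tau_append: "theta_tau P (u @ v) = theta_tau P u \<otimes>\<^bsub>pc_group P 2\<^esub> theta_tau P v"
  unfolding theta_tau_def by (simp add: theta_append[OF tau_in_lists tau_in_lists] del: in_lists_conv_set)

lemma theta_tau_in_carrier: "theta_tau P w \<in> carrier (pc_group P 2)"
  unfolding theta_tau_def by (rule theta_in_carrier[OF tau_in_lists])

lemma theta_tau_Nil: "theta_tau P [] = \<one>\<^bsub>pc_group P 2\<^esub>"
  unfolding theta_tau_def by (simp add: one_pc_group)

lemma theta_tau_inv_letter:
  assumes der: "pcp_derived P" and "2 \<le> l" "l \<le> pc_n P"
  shows "theta_tau P [(l, False)] = inv\<^bsub>pc_group P 2\<^esub> theta_tau P [(l, True)]"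
proof -
  interpret G: group "pc_group P 2" by (rule group_pc_group)
  have "pc_eq P 2 (gvec P 1 (pc_a P 1 l) @ gvec P 1 (pc_c P 1 l)) []"
    using der assms(2,3) unfolding pcp_derived_def by simp
  then have "theta_tau P ([(l, True)] @ [(l, False)]) = \<one>\<^bsub>pc_group P 2\<^esub>"
    by (simp add: theta_tau_def one_pc_group theta_eqI)
  then have "theta_tau P [(l, False)] \<otimes>\<^bsub>pc_group P 2\<^esub> theta_tau P [(l, True)] = \<one>\<^bsub>pc_group P 2\<^esub>"
    using G.inv_comm theta_tau_in_carrier by (metis theta_tau_append)
  then show ?thesis using G.inv_equality theta_tau_in_carrier by blast
qed

lemma theta_tau_pc_eq:
  assumes der: "pcp_derived P" and "2 \<le> k" and resp: "\<forall>(u, v) \<in> rels P k. theta_tau P u = theta_tau P v"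
  shows "pc_eq P k u v \<Longrightarrow> theta_tau P u = theta_tau P v"
proof (induction rule: pc_eq.induct)
  case (rel u v x y)
  then show ?case using resp by (auto simp: theta_tau_append)
next
  case (cancel i s x y)
  interpret G: group "pc_group P 2" by (rule group_pc_group)
  from cancel assms(2) have i: "2 \<le> i" "i \<le> pc_n P" by (auto simp: alph_def)
  have "theta_tau P [(i, s), (i, \<not> s)] =
      theta_tau P [(i, s)] \<otimes>\<^bsub>pc_group P 2\<^esub> theta_tau P [(i, \<not> s)]"
    using theta_tau_append[of P "[(i, s)]" "[(i, \<not> s)]"] by simp
  also have "\<dots> = \<one>\<^bsub>pc_group P 2\<^esub>"
    using theta_tau_inv_letter[OF der i] theta_tau_in_carrier[of P] by (cases s) auto
  finally have "theta_tau P [(i, s), (i, \<not> s)] = \<one>\<^bsub>pc_group P 2\<^esub>" .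
  then show ?case by (simp only: theta_tau_append G.l_one theta_tau_in_carrier)
qed simp_all

definition subst_a :: "pcp \<Rightarrow> nat \<Rightarrow> word \<Rightarrow> word" where
  "subst_a P m w = concat (map (\<lambda>(l, s).
     if s then gvec P m (pc_a P m l) else word_inv (gvec P m (pc_a P m l))) w)"

lemma subst_a_Nil [simp]: "subst_a P m [] = []"
  and subst_a_Cons [simp]: "subst_a P m ((l, s) # w) =
    (if s then gvec P m (pc_a P m l) else word_inv (gvec P m (pc_a P m l))) @ subst_a P m w"
  by (simp_all add: subst_a_def)

lemma subst_a_in_lists: "subst_a P m w \<in> lists (alph P (Suc m))"
proof (induction w)
  case (Cons a w)
  then show ?case using gvec_in_lists[of "Suc m" m P] by (cases a) (simp del: in_lists_conv_set)
qed simp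

locale word_hom = group G for G (structure) +
  fixes P :: pcp and F :: "word \<Rightarrow> 'a"
  assumes F_append: "u \<in> lists (alph P 2) \<Longrightarrow> v \<in> lists (alph P 2) \<Longrightarrow> F (u @ v) = F u \<otimes> F v"
    and F_in_carrier: "u \<in> lists (alph P 2) \<Longrightarrow> F u \<in> carrier G"
    and F_Nil: "F [] = \<one>"
begin

lemma F_word_inv:
  assumes "2 \<le> k" and inv_letter: "\<And>l. k \<le> l \<Longrightarrow> l \<le> pc_n P \<Longrightarrow> F [(l, False)] = inv F [(l, True)]"
  shows "w \<in> lists (alph P k) \<Longrightarrow> F (word_inv w) = inv F w"
proof (induction w rule: list.induct)
  case (Cons a w)
  obtain l s where a: "a = (l, s)" by (cases a)
  with Cons.prems assms(1) have l: "k \<le> l" "l \<le> pc_n P" "(l, b) \<in> alph P 2" for b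
    by (auto simp: alph_def)
  have w: "w \<in> lists (alph P 2)" "word_inv w \<in> lists (alph P 2)"
    using Cons.prems lists_alph_mono[OF assms(1)] by (auto simp del: in_lists_conv_set)
  have "F [(l, \<not> s)] = inv F [(l, s)]"
    using inv_letter[OF l(1,2)] F_in_carrier[of "[(l, True)]"] l(3) by (cases s) auto
  then have "F (word_inv (a # w)) = inv F w \<otimes> inv F [(l, s)]"
    using Cons l(3) w a F_append[of "word_inv w" "[(l, \<not> s)]"] by simp
  also have "\<dots> = inv (F [(l, s)] \<otimes> F w)"
    using F_in_carrier l(3) w by (simp add: inv_mult_group)
  also have "F [(l, s)] \<otimes> F w = F (a # w)"
    using F_append[of "[(l, s)]" w] l(3) w by (simp add: a)
  finally show ?case .
qed (simp add: F_Nil)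

lemma F_conj_subst_a:
  assumes "1 \<le> m" and "\<alpha> \<in> carrier G"
    and inv_letter: "\<And>l. m < l \<Longrightarrow> l \<le> pc_n P \<Longrightarrow> F [(l, False)] = inv F [(l, True)]"
    and conj: "\<And>l. m < l \<Longrightarrow> l \<le> pc_n P \<Longrightarrow> F [(l, True)] \<otimes> \<alpha> = \<alpha> \<otimes> F (gvec P m (pc_a P m l))"
  shows "W \<in> lists (alph P (Suc m)) \<Longrightarrow> F W \<otimes> \<alpha> = \<alpha> \<otimes> F (subst_a P m W)"
proof (induction W rule: list.induct)
  case Nil
  then show ?case using assms(2) by (simp add: F_Nil)
next
  case (Cons a W)
  obtain l s where a: "a = (l, s)" by (cases a)
  with Cons.prems assms(1) have l: "m < l" "l \<le> pc_n P" "(l, b) \<in> alph P 2" for b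
    by (auto simp: alph_def)
  let ?g = "gvec P m (pc_a P m l)"
  have W: "W \<in> lists (alph P 2)" "subst_a P m W \<in> lists (alph P 2)"
    using Cons.prems lists_alph_mono[of 2 "Suc m"] subst_a_in_lists assms(1)
    by (auto simp del: in_lists_conv_set)
  have g: "?g \<in> lists (alph P 2)" "word_inv ?g \<in> lists (alph P 2)"
    using gvec_in_lists[of 2 m P] assms(1) by (auto simp del: in_lists_conv_set)
  have letter: "F [(l, s)] \<otimes> \<alpha> = \<alpha> \<otimes> F (if s then ?g else word_inv ?g)"
  proof (cases s)
    case False
    have "F (word_inv ?g) = inv F ?g"
      using assms(1) inv_letter by (intro F_word_inv[of "Suc m"]) (auto simp: gvec_in_lists)
    moreover have "inv F [(l, True)] \<otimes> \<alpha> = \<alpha> \<otimes> inv F ?g"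
      using conj[OF l(1,2)] F_in_carrier g l(3) assms(2) by (intro conj_inv_eq) auto
    ultimately show ?thesis using False inv_letter[OF l(1,2)] by simp
  qed (use conj[OF l(1,2)] in simp)
  have "F (a # W) \<otimes> \<alpha> = F [(l, s)] \<otimes> F W \<otimes> \<alpha>"
    using F_append[of "[(l, s)]" W] l(3) W by (simp add: a)
  also have "\<dots> = F [(l, s)] \<otimes> (F W \<otimes> \<alpha>)"
    using F_in_carrier l(3) W assms(2) by (simp add: m_assoc del: in_lists_conv_set)
  also have "\<dots> = (F [(l, s)] \<otimes> \<alpha>) \<otimes> F (subst_a P m W)"
    using Cons F_in_carrier l(3) W assms(2) by (simp add: m_assoc)
  also have "\<dots> = \<alpha> \<otimes> F (subst_a P m (a # W))"
    using letter F_in_carrier W g assms(2) by (simp add: a F_append m_assoc)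
  finally show ?case .
qed

end

lemma word_hom_theta: "word_hom (pc_group P 2) P (theta P 2)"
proof (rule word_hom.intro)
  show "word_hom_axioms (pc_group P 2) P (theta P 2)"
    by unfold_locales (simp_all add: theta_append theta_in_carrier one_pc_group del: in_lists_conv_set)
qed (rule group_pc_group)

lemma word_hom_theta_tau: "word_hom (pc_group P 2) P (theta_tau P)"
proof (rule word_hom.intro)
  show "word_hom_axioms (pc_group P 2) P (theta_tau P)"
    by unfold_locales (simp_all add: theta_tau_append theta_tau_in_carrier theta_tau_Nil)
qed (rule group_pc_group)

lemma theta_conj_a:
  assumes "2 \<le> m" "m < l" "l \<le> pc_n P"
  shows "theta P 2 [(l, True)] \<otimes>\<^bsub>pc_group P 2\<^esub> theta P 2 [(m, True)] =
    theta P 2 [(m, True)] \<otimes>\<^bsub>pc_group P 2\<^esub> theta P 2 (gvec P m (pc_a P m l))"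
proof -
  have "pc_eq P 2 ([(l, True)] @ [(m, True)]) ([(m, True)] @ gvec P m (pc_a P m l))"
    by (rule pc_eq_relI) (use assms in \<open>auto simp: rels_def\<close>)
  moreover have "[(l, True)] \<in> lists (alph P 2)" "[(m, True)] \<in> lists (alph P 2)"
    "gvec P m (pc_a P m l) \<in> lists (alph P 2)"
    using assms gvec_in_lists[of 2 m P] by (auto simp: alph_def simp del: in_lists_conv_set)
  ultimately show ?thesis by (simp add: theta_append [symmetric] theta_eqI del: in_lists_conv_set)
qed

(* In H^[2] the relation of type b reads g_k = g_m^-1 g^(b_(m,k)) g_m, and conjugation by g_m acts on
   words in g_(m+1), ..., g_n as subst_a; since H^[m+1] embeds in H^[2], the resulting equation
   already holds at level m + 1. *)
lemma pc_eq_rel_b_subst_a: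
  assumes valid: "pcp_valid P" and der: "pcp_derived P" and cons: "consistent_from P 2"
    and m: "2 \<le> m" "m < k" "k \<le> pc_n P" "pc_r P m = \<infinity>"
  shows "pc_eq P (Suc m) [(k, True)] (subst_a P m (gvec P m (pc_b P m k)))"
proof -
  interpret T: word_hom "pc_group P 2" P "theta P 2" by (rule word_hom_theta)
  let ?\<alpha> = "theta P 2 [(m, True)]" and ?gb = "gvec P m (pc_b P m k)"
  let ?S = "subst_a P m ?gb"
  have letters: "[(k, True)] \<in> lists (alph P (Suc m))" "[(k, True)] \<in> lists (alph P 2)"
    "[(m, s)] \<in> lists (alph P 2)" for s
    using m by (auto simp: alph_def)
  have gb: "?gb \<in> lists (alph P (Suc m))" "?gb \<in> lists (alph P 2)"
    using gvec_in_lists[of _ m P] m(1) by auto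
  have S: "?S \<in> lists (alph P (Suc m))" "?S \<in> lists (alph P 2)"
    using subst_a_in_lists lists_alph_mono[of 2 "Suc m"] m(1) by auto
  note carrier = theta_in_carrier[OF letters(2)] theta_in_carrier[OF letters(3)]
    theta_in_carrier[OF gb(2)] theta_in_carrier[OF S(2)]
  have "pc_eq P 2 ([(k, True)] @ [(m, False)]) ([(m, False)] @ ?gb)"
    by (rule pc_eq_relI) (use m in \<open>auto simp: rels_def\<close>)
  then have "theta P 2 ([(k, True)] @ [(m, False)]) = theta P 2 ([(m, False)] @ ?gb)"
    by (rule theta_eqI)
  then have "theta P 2 [(k, True)] \<otimes>\<^bsub>pc_group P 2\<^esub> inv\<^bsub>pc_group P 2\<^esub> ?\<alpha> =
      inv\<^bsub>pc_group P 2\<^esub> ?\<alpha> \<otimes>\<^bsub>pc_group P 2\<^esub> theta P 2 ?gb"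
    unfolding theta_append[OF letters(2,3)] theta_append[OF letters(3) gb(2)]
    using theta_inv_letter[of 2 m P] m by simp
  moreover have "theta P 2 ?gb \<otimes>\<^bsub>pc_group P 2\<^esub> ?\<alpha> = ?\<alpha> \<otimes>\<^bsub>pc_group P 2\<^esub> theta P 2 ?S"
    using m(1) carrier theta_inv_letter[of 2 _ P] theta_conj_a[OF m(1)] gb(1)
    by (intro T.F_conj_subst_a) auto
  then have "theta P 2 ?S \<otimes>\<^bsub>pc_group P 2\<^esub> inv\<^bsub>pc_group P 2\<^esub> ?\<alpha> =
      inv\<^bsub>pc_group P 2\<^esub> ?\<alpha> \<otimes>\<^bsub>pc_group P 2\<^esub> theta P 2 ?gb"
    using T.conj_eq_iff carrier by blast
  ultimately have "theta P 2 [(k, True)] = theta P 2 ?S"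
    using carrier T.right_cancel[OF T.inv_closed] by metis
  then have "pc_eq P 2 [(k, True)] ?S" using theta_eq_iff[OF letters(2) S(2)] by simp
  moreover have "level_embeds P (Suc m)" using level_embeds[OF valid der cons] m(1) by simp
  ultimately show ?thesis using letters(1) S(1) by (simp add: level_embeds_def del: in_lists_conv_set)
qed

lemma theta_tau_rel_b:
  assumes der: "pcp_derived P" and m: "2 \<le> m" "m < k" "k \<le> pc_n P"
    and conj: "\<And>l. m < l \<Longrightarrow> l \<le> pc_n P \<Longrightarrow>
      theta_tau P ((m, True) # gvec P m (pc_a P m l)) = theta_tau P [(l, True), (m, True)]"
    and subst: "theta_tau P [(k, True)] = theta_tau P (subst_a P m (gvec P m (pc_b P m k)))"
  shows "theta_tau P [(k, True), (m, False)] = theta_tau P ((m, False) # gvec P m (pc_b P m k))"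
proof -
  interpret T: word_hom "pc_group P 2" P "theta_tau P" by (rule word_hom_theta_tau)
  let ?\<alpha> = "theta_tau P [(m, True)]" and ?gb = "gvec P m (pc_b P m k)"
  have Cons: "theta_tau P (a # w) = theta_tau P [a] \<otimes>\<^bsub>pc_group P 2\<^esub> theta_tau P w" for a w
    using theta_tau_append[of P "[a]" w] by simp
  have "theta_tau P [(l, True)] \<otimes>\<^bsub>pc_group P 2\<^esub> ?\<alpha> = ?\<alpha> \<otimes>\<^bsub>pc_group P 2\<^esub> theta_tau P (gvec P m (pc_a P m l))"
    if "m < l" "l \<le> pc_n P" for l
    using conj[OF that] Cons[of "(m, True)" "gvec P m (pc_a P m l)"] Cons[of "(l, True)" "[(m, True)]"]
    by simp
  then have "theta_tau P ?gb \<otimes>\<^bsub>pc_group P 2\<^esub> ?\<alpha> = ?\<alpha> \<otimes>\<^bsub>pc_group P 2\<^esub> theta_tau P (subst_a P m ?gb)"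
    using m(1) theta_tau_in_carrier theta_tau_inv_letter[OF der] gvec_in_lists[of "Suc m" m P]
    by (intro T.F_conj_subst_a) auto
  then have "theta_tau P [(k, True)] \<otimes>\<^bsub>pc_group P 2\<^esub> inv\<^bsub>pc_group P 2\<^esub> ?\<alpha> =
      inv\<^bsub>pc_group P 2\<^esub> ?\<alpha> \<otimes>\<^bsub>pc_group P 2\<^esub> theta_tau P ?gb"
    unfolding subst T.conj_eq_iff[OF theta_tau_in_carrier theta_tau_in_carrier theta_tau_in_carrier] .
  moreover have "theta_tau P [(m, False)] = inv\<^bsub>pc_group P 2\<^esub> ?\<alpha>"
    using theta_tau_inv_letter[OF der, of m] m by simp
  ultimately show ?thesis using Cons[of "(k, True)" "[(m, False)]"] Cons[of "(m, False)" ?gb] by simp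
qed

lemma theta_tau_respects_rels:
  assumes valid: "pcp_valid P" and der: "pcp_derived P" and cons: "consistent_from P 2"
    and conj: "\<And>j k. 1 < j \<Longrightarrow> j < k \<Longrightarrow> k \<le> pc_n P \<Longrightarrow>
      theta_tau P ((j, True) # gvec P j (pc_a P j k)) = theta_tau P [(k, True), (j, True)]"
    and power: "\<And>j t. 1 < j \<Longrightarrow> j \<le> pc_n P \<Longrightarrow> pc_r P j = enat t \<Longrightarrow>
      theta_tau P (replicate t (j, True)) = theta_tau P (gvec P j (pc_e P j))"
  shows "2 \<le> m \<Longrightarrow> (u, v) \<in> rels P m \<Longrightarrow> theta_tau P u = theta_tau P v"
proof (induction "Suc (pc_n P) - m" arbitrary: m u v rule: less_induct)
  case less
  have IH: "\<forall>(u, v) \<in> rels P (Suc m). theta_tau P u = theta_tau P v"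
  proof (cases "m \<le> pc_n P")
    case True
    show ?thesis
    proof clarify
      fix u' v' assume "(u', v') \<in> rels P (Suc m)"
      with True less.prems(1) show "theta_tau P u' = theta_tau P v'" by (intro less.hyps) auto
    qed
  qed (auto simp: rels_def)
  from less.prems(2) show ?case
  proof (cases rule: rels_cases)
    case higher
    with IH show ?thesis by blast
  next
    case (power t)
    with less.prems(1) show ?thesis using assms(5) by simp
  next
    case (conj_a j)
    with less.prems(1) show ?thesis using conj by simp
  next
    case (conj_b k)
    have "pc_eq P (Suc m) [(k, True)] (subst_a P m (gvec P m (pc_b P m k)))"
      using pc_eq_rel_b_subst_a[OF valid der cons less.prems(1)] conj_b by simp
    then have "theta_tau P [(k, True)] = theta_tau P (subst_a P m (gvec P m (pc_b P m k)))"
      using theta_tau_pc_eq[OF der _ IH] less.prems(1) by simp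
    with conj_b show ?thesis using theta_tau_rel_b[OF der less.prems(1)] conj less.prems(1) by simp
  qed
qed

lemma theta_tau_respects_rels_iff:
  assumes valid: "pcp_valid P" and der: "pcp_derived P" and cons: "consistent_from P 2"
  shows "(\<forall>(u, v) \<in> rels P 2. theta_tau P u = theta_tau P v) \<longleftrightarrow>
    (\<forall>j k. 1 < j \<and> j < k \<and> k \<le> pc_n P \<longrightarrow>
       theta_tau P ((j, True) # gvec P j (pc_a P j k)) = theta_tau P [(k, True), (j, True)]) \<and>
    (\<forall>j t. 1 < j \<and> j \<le> pc_n P \<and> pc_r P j = enat t \<longrightarrow>
       theta_tau P (replicate t (j, True)) = theta_tau P (gvec P j (pc_e P j)))"
proof (intro iffI conjI allI impI)
  assume resp: "\<forall>(u, v) \<in> rels P 2. theta_tau P u = theta_tau P v"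
  fix j k t
  assume "1 < j \<and> j < k \<and> k \<le> pc_n P"
  then have "([(k, True), (j, True)], (j, True) # gvec P j (pc_a P j k)) \<in> rels P 2"
    by (auto simp: rels_def)
  from bspec[OF resp this]
  show "theta_tau P ((j, True) # gvec P j (pc_a P j k)) = theta_tau P [(k, True), (j, True)]"
    by simp
next
  assume resp: "\<forall>(u, v) \<in> rels P 2. theta_tau P u = theta_tau P v"
  fix j t
  assume "1 < j \<and> j \<le> pc_n P \<and> pc_r P j = enat t"
  then have "(replicate t (j, True), gvec P j (pc_e P j)) \<in> rels P 2"
    by (auto simp: rels_def)
  from bspec[OF resp this]
  show "theta_tau P (replicate t (j, True)) = theta_tau P (gvec P j (pc_e P j))"
    by simp
next
  assume "(\<forall>j k. 1 < j \<and> j < k \<and> k \<le> pc_n P \<longrightarrow>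
       theta_tau P ((j, True) # gvec P j (pc_a P j k)) = theta_tau P [(k, True), (j, True)]) \<and>
    (\<forall>j t. 1 < j \<and> j \<le> pc_n P \<and> pc_r P j = enat t \<longrightarrow>
       theta_tau P (replicate t (j, True)) = theta_tau P (gvec P j (pc_e P j)))"
  then have conj: "\<And>j k. 1 < j \<Longrightarrow> j < k \<Longrightarrow> k \<le> pc_n P \<Longrightarrow>
      theta_tau P ((j, True) # gvec P j (pc_a P j k)) = theta_tau P [(k, True), (j, True)]"
    and power: "\<And>j t. 1 < j \<Longrightarrow> j \<le> pc_n P \<Longrightarrow> pc_r P j = enat t \<Longrightarrow>
      theta_tau P (replicate t (j, True)) = theta_tau P (gvec P j (pc_e P j))"
    by blast+
  show "\<forall>(u, v) \<in> rels P 2. theta_tau P u = theta_tau P v"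
  proof clarify
    fix u v assume "(u, v) \<in> rels P 2"
    from theta_tau_respects_rels[OF valid der cons conj power order_refl this]
    show "theta_tau P u = theta_tau P v" .
  qed
qed

lemma induced_endomorphism_iff:
  assumes der: "pcp_derived P"
  shows "(\<exists>\<sigma> \<in> hom (pc_group P 2) (pc_group P 2).
      \<forall>w \<in> lists (alph P 2). \<sigma> (theta P 2 w) = theta P 2 (tau P w)) \<longleftrightarrow>
    (\<forall>(u, v) \<in> rels P 2. theta_tau P u = theta_tau P v)"
proof
  assume "\<exists>\<sigma> \<in> hom (pc_group P 2) (pc_group P 2).
      \<forall>w \<in> lists (alph P 2). \<sigma> (theta P 2 w) = theta P 2 (tau P w)"
  then obtain \<sigma> where \<sigma>: "\<forall>w \<in> lists (alph P 2). \<sigma> (theta P 2 w) = theta_tau P w"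
    unfolding theta_tau_def by blast
  show "\<forall>(u, v) \<in> rels P 2. theta_tau P u = theta_tau P v"
  proof clarify
    fix u v assume "(u, v) \<in> rels P 2"
    then have "pc_eq P 2 u v" by (rule pc_eq_relI)
    then have "u \<in> lists (alph P 2)" "v \<in> lists (alph P 2)" "theta P 2 u = theta P 2 v"
      using pc_eq_in_lists theta_eqI by blast+
    with \<sigma> show "theta_tau P u = theta_tau P v" by metis
  qed
next
  assume "\<forall>(u, v) \<in> rels P 2. theta_tau P u = theta_tau P v"
  then have "pc_eq P 2 u v \<Longrightarrow> theta_tau P u = theta_tau P v" for u v
    using theta_tau_pc_eq[OF der order_refl] by blast
  then obtain \<sigma> where "\<sigma> \<in> hom (pc_group P 2) (pc_group P 2)"
    "\<And>w. w \<in> lists (alph P 2) \<Longrightarrow> \<sigma> (theta P 2 w) = theta_tau P w"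
    using hom_from_word_map[of P 2 "theta_tau P"] theta_tau_append theta_tau_in_carrier by metis
  then show "\<exists>\<sigma> \<in> hom (pc_group P 2) (pc_group P 2).
      \<forall>w \<in> lists (alph P 2). \<sigma> (theta P 2 w) = theta P 2 (tau P w)"
    unfolding theta_tau_def by blast
qed

section \<open>Collecting g_1 to the front\<close>

lemma unique_g1_position:
  assumes "u \<in> lists (alph P 2)" "R \<in> lists (alph P 2)" "2 \<le> fst x"
    and "k < length (u @ x # (1, True) # R)" "fst ((u @ x # (1, True) # R) ! k) = 1"
  shows "k = Suc (length u)"
proof (rule ccontr)
  assume "k \<noteq> Suc (length u)"
  then consider "k < length u" | "k = length u" | "k > Suc (length u)" by linarith
  then show False
  proof cases
    case 1
    then have "(u @ x # (1, True) # R) ! k \<in> set u" by (simp add: nth_append)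
    with assms(1,5) show False by (auto simp: alph_def)
  next
    case 2
    with assms(3,5) show False by simp
  next
    case 3
    define k' where "k' = k - Suc (Suc (length u))"
    with 3 have k': "k = length u + Suc (Suc k')" by simp
    with assms(4) have "(u @ x # (1, True) # R) ! k \<in> set R" by (simp add: nth_append)
    with assms(2,5) show False by (auto simp: alph_def)
  qed
qed

lemma cands_g1_after_letter:
  assumes valid: "pcp_valid P" and u: "u \<in> lists (alph P 2)" and R: "R \<in> lists (alph P 2)"
    and "2 \<le> j" and c: "(1, p, q, l, rhs) \<in> cands P (u @ (j, s) # (1, True) # R)"
  shows "length u < p \<or> (p = length u \<and> q = (if s then 2 else 4))"
proof -
  let ?w = "u @ (j, s) # (1, True) # R"
  have w: "?w ! length u = (j, s)" "?w ! Suc (length u) = (1, True)" by (simp_all add: nth_append)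
  have pos: "k = Suc (length u)" if "k < length ?w" "fst (?w ! k) = 1" for k
    using unique_g1_position[OF u R, of "(j, s)" k] that assms(4) by simp
  from c show ?thesis
  proof (cases rule: cands_cases)
    case power
    with valid c have "l \<noteq> 0" using relative_order_nonzero[of P 1] by (auto simp: mem_cands_iff)
    with power have "?w ! p = (1, True)" "p < length ?w" by (metis add.right_neutral not_gr_zero, linarith)
    with pos[of p] show ?thesis by simp
  next
    case (conj_a k)
    with pos[of "Suc p"] w show ?thesis by simp
  next
    case (conj_b k)
    with pos[of "Suc p"] w show ?thesis by simp
  next
    case (conj_c k)
    with pos[of "Suc p"] w show ?thesis by simp
  next
    case (conj_d k)
    with pos[of "Suc p"] w show ?thesis by simp
  next
    case (inverse t)
    with pos[of p] w show ?thesis by simp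
  next
    case (cancel s')
    with pos[of p] pos[of "Suc p"] show ?thesis by simp
  qed
qed

(* The letter g_1 is the only one of generator 1, so the step chosen by collection swaps it with
   the letter in front of it. *)
lemma collect_step_move_g1:
  assumes valid: "pcp_valid P" and u: "u \<in> lists (alph P 2)" and R: "R \<in> lists (alph P 2)"
    and j: "2 \<le> j" "j \<le> pc_n P" and neg: "\<not> s \<Longrightarrow> pc_r P j = \<infinity>"
  shows "collect_step P (u @ (j, s) # (1, True) # R) = Some (u @ (1, True) # tau P [(j, s)] @ R)"
proof -
  let ?w = "u @ (j, s) # (1, True) # R" and ?q = "if s then 2 else 4 :: nat"
  have c: "(1, length u, ?q, 2, (1, True) # tau P [(j, s)]) \<in> cands P ?w"
    using j neg by (cases s) (simp_all add: mem_cands_iff nth_append)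
  have "(1, length u, ?q) \<le> (m', p', q')" if "(m', p', q', l', r') \<in> cands P ?w" for m' p' q' l' r'
  proof (cases "m' = 1")
    case True
    from cands_g1_after_letter[OF valid u R j(1) that[unfolded True]] True show ?thesis by auto
  next
    case False
    with that have "1 < m'" by (simp add: mem_cands_iff)
    then show ?thesis by simp
  qed
  from collect_step_eqI[OF c this] show ?thesis by simp
qed

lemma collect_move_g1:
  assumes valid: "pcp_valid P"
  shows "u \<in> lists (alph P 2) \<Longrightarrow> \<forall>(l, s) \<in> set u. \<not> s \<longrightarrow> pc_r P l = \<infinity> \<Longrightarrow>
    R \<in> lists (alph P 2) \<Longrightarrow> collect P (u @ (1, True) # R) = collect P ((1, True) # tau P u @ R)"
proof (induction u arbitrary: R rule: rev_induct)
  case (snoc x u)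
  obtain j s where x: "x = (j, s)" by (cases x)
  from snoc.prems x have u: "u \<in> lists (alph P 2)" and j: "2 \<le> j" "j \<le> pc_n P"
    and neg: "\<not> s \<Longrightarrow> pc_r P j = \<infinity>"
    by (auto simp: alph_def)
  have "collect P ((u @ [x]) @ (1, True) # R) = collect P (u @ (1, True) # tau P [x] @ R)"
    using collect_step_collect[OF valid collect_step_move_g1[OF valid u snoc.prems(3) j neg]] x by simp
  also have "\<dots> = collect P ((1, True) # tau P (u @ [x]) @ R)"
    using snoc.IH[OF u] snoc.prems tau_in_lists[of P "[x]"] by (simp del: tau_Cons)
  finally show ?case .
qed simp

lemma collect_g1_power_one:
  assumes valid: "pcp_valid P" and "pc_r P 1 = enat 1" "1 \<le> pc_n P"
  shows "collect P ((1, True) # X) = collect P (gvec P 1 (pc_e P 1) @ X)"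
proof -
  have c: "(1, 0, 1, 1, gvec P 1 (pc_e P 1)) \<in> cands P ((1, True) # X)"
    using assms(2,3) by (simp add: mem_cands_iff)
  have "(1, 0, 1) \<le> (m', p', q')" if "(m', p', q', l', r') \<in> cands P ((1, True) # X)" for m' p' q' l' r'
    using that by (auto simp: mem_cands_iff)
  then have "collect_step P ((1, True) # X) = Some (gvec P 1 (pc_e P 1) @ X)"
    using collect_step_eqI[OF c] by simp
  then show ?thesis by (rule collect_step_collect[OF valid])
qed

lemma cands_g1_Cons:
  assumes valid: "pcp_valid P" and r1: "pc_r P 1 \<noteq> enat 1" and Y: "Y \<in> lists (alph P 2)"
    and c: "(m, p, q, l, rhs) \<in> cands P ((1, True) # Y)"
  obtains p' where "p = Suc p'" "(m, p', q, l, rhs) \<in> cands P Y"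
proof (cases p)
  case 0
  have Y0: "0 < length Y \<Longrightarrow> 2 \<le> fst (Y ! 0)" using nth_in_alph[OF Y, of 0] by simp
  have "1 \<le> m" using c by (simp add: mem_cands_iff)
  from c[unfolded 0] have False
  proof (cases rule: cands_cases)
    case power
    with valid c have "l \<noteq> 0" using relative_order_nonzero by (fastforce simp: mem_cands_iff)
    with power have "m = 1" by (metis add_0 nth_Cons_0 not_gr_zero prod.inject)
    with power r1 \<open>l \<noteq> 0\<close> have "1 < l" by (cases "l = 1") auto
    with power \<open>m = 1\<close> Y0 show False by fastforce
  next
    case cancel
    with Y0 show False by auto
  qed (use \<open>1 \<le> m\<close> in auto)
  then show thesis ..
next
  case (Suc p')
  with c have "(m, p', q, l, rhs) \<in> cands P Y" by (simp add: Suc_mem_cands_Cons_iff)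
  with Suc show thesis by (rule that)
qed

lemma collect_g1_Cons:
  assumes valid: "pcp_valid P" and der: "pcp_derived P" and r1: "pc_r P 1 \<noteq> enat 1"
    and X: "X \<in> lists (alph P 2)"
  obtains T where "collect P ((1, True) # X) = (1, True) # T" "pc_eq P 2 X T" "reduced_from P 2 T"
proof -
  obtain V where V: "(collect_step_rel P)\<^sup>*\<^sup>* ((1, True) # X) V" "collect_step P V = None"
    using collect_step_terminates[OF valid] by blast
  from V(1) have "\<exists>T. V = (1, True) # T \<and> pc_eq P 2 X T"
  proof (induction rule: rtranclp_induct)
    case base
    then show ?case using X by (auto intro: pc_eq.refl)
  next
    case (step y z)
    then obtain T where T: "y = (1, True) # T" "pc_eq P 2 X T" by blast
    obtain m p q l rhs where c: "(m, p, q, l, rhs) \<in> cands P y"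
      and z: "z = take p y @ rhs @ drop (p + l) y"
      using collect_step_SomeD[OF step.hyps(2)] by blast
    from T(2) have T2: "T \<in> lists (alph P 2)" using pc_eq_in_lists by blast
    with c T(1) obtain p' where p': "p = Suc p'" "(m, p', q, l, rhs) \<in> cands P T"
      using cands_g1_Cons[OF valid r1] by metis
    with z T(1) have "z = (1, True) # (take p' T @ rhs @ drop (p' + l) T)" by simp
    moreover have "pc_eq P 2 T (take p' T @ rhs @ drop (p' + l) T)"
    proof -
      have "take p' T \<in> lists (alph P 2)" "drop (p' + l) T \<in> lists (alph P 2)"
        using T2 by (auto dest: in_set_takeD in_set_dropD)
      from pc_eq_context[OF cand_pc_eq[OF valid T2 derived_relations_hold_2[OF der] p'(2)] this]
      show ?thesis by (metis append_take_drop_id drop_drop add.commute)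
    qed
    ultimately show ?case using T(2) by (blast intro: pc_eq.trans)
  qed
  then obtain T where T: "V = (1, True) # T" "pc_eq P 2 X T" by blast
  have "collect P ((1, True) # X) = V" using collect_eqI[OF valid V] .
  moreover have "reduced_from P 2 T"
    using no_cands_reduced[OF valid _ _ cands_Cons_empty] V(2) T pc_eq_in_lists
    by (simp add: collect_step_None_iff)
  ultimately show thesis using that T by simp
qed

lemma collect_g1_Cons_eq_iff:
  assumes valid: "pcp_valid P" and der: "pcp_derived P" and cons: "consistent_from P 2"
    and "1 \<le> pc_n P" and X1: "X1 \<in> lists (alph P 2)" and X2: "X2 \<in> lists (alph P 2)"
  shows "collect P ((1, True) # X1) = collect P ((1, True) # X2) \<longleftrightarrow> pc_eq P 2 X1 X2"
proof (cases "pc_r P 1 = enat 1")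
  case True
  define E where "E = gvec P 1 (pc_e P 1)"
  have E: "E \<in> lists (alph P 2)" unfolding E_def by (rule gvec_in_lists) simp
  have "collect P ((1, True) # X1) = collect P ((1, True) # X2) \<longleftrightarrow>
      collect P (E @ X1) = collect P (E @ X2)"
    using collect_g1_power_one[OF valid True assms(4)] by (simp add: E_def)
  also have "\<dots> \<longleftrightarrow> pc_eq P 2 (E @ X1) (E @ X2)"
    using collect_eq_iff_pc_eq[OF valid der cons] E X1 X2 by simp
  also have "\<dots> \<longleftrightarrow> pc_eq P 2 X1 X2"
    using pc_eq_cancel_left[OF E X1 X2] pc_eq_append_left[OF _ E] by blast
  finally show ?thesis .
next
  case False
  obtain T1 where T1: "collect P ((1, True) # X1) = (1, True) # T1" "pc_eq P 2 X1 T1" "reduced_from P 2 T1"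
    using collect_g1_Cons[OF valid der False X1] by blast
  obtain T2 where T2: "collect P ((1, True) # X2) = (1, True) # T2" "pc_eq P 2 X2 T2" "reduced_from P 2 T2"
    using collect_g1_Cons[OF valid der False X2] by blast
  show ?thesis
  proof
    assume "collect P ((1, True) # X1) = collect P ((1, True) # X2)"
    with T1(1) T2(1) have "T1 = T2" by simp
    with T1(2) T2(2) show "pc_eq P 2 X1 X2" by (metis pc_eq.sym pc_eq.trans)
  next
    assume "pc_eq P 2 X1 X2"
    with T1(2) T2(2) have "pc_eq P 2 T1 T2" by (meson pc_eq.sym pc_eq.trans)
    from consistent_reduced_unique[OF cons this T1(3) T2(3)] T1(1) T2(1)
    show "collect P ((1, True) # X1) = collect P ((1, True) # X2)" by simp
  qed
qed

lemma collect_append_g1_eq_iff: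
  assumes valid: "pcp_valid P" and der: "pcp_derived P" and cons: "consistent_from P 2"
    and "1 \<le> pc_n P"
    and u1: "u1 \<in> lists (alph P 2)" "\<forall>(l, s) \<in> set u1. \<not> s \<longrightarrow> pc_r P l = \<infinity>"
    and u2: "u2 \<in> lists (alph P 2)" "\<forall>(l, s) \<in> set u2. \<not> s \<longrightarrow> pc_r P l = \<infinity>"
  shows "collect P (u1 @ [(1, True)]) = collect P (u2 @ [(1, True)]) \<longleftrightarrow>
    theta_tau P u1 = theta_tau P u2"
proof -
  have "collect P (u1 @ [(1, True)]) = collect P ((1, True) # tau P u1)"
    and "collect P (u2 @ [(1, True)]) = collect P ((1, True) # tau P u2)"
    using collect_move_g1[OF valid u1, of "[]"] collect_move_g1[OF valid u2, of "[]"] by simp_all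
  then show ?thesis
    using collect_g1_Cons_eq_iff[OF valid der cons assms(4) tau_in_lists tau_in_lists]
    by (simp add: theta_tau_def theta_eq_iff[OF tau_in_lists tau_in_lists])
qed

lemma collect_conj_a_iff:
  assumes valid: "pcp_valid P" and der: "pcp_derived P" and cons: "consistent_from P 2"
    and jk: "1 < j" "j < k" "k \<le> pc_n P"
  shows "collect P ((j, True) # gvec P j (pc_a P j k) @ [(1, True)]) =
      collect P [(k, True), (j, True), (1, True)] \<longleftrightarrow>
    theta_tau P ((j, True) # gvec P j (pc_a P j k)) = theta_tau P [(k, True), (j, True)]"
proof -
  have "\<forall>k'. j < k' \<and> k' \<le> pc_n P \<longrightarrow> in_range P k' (pc_a P j k k')"
    using valid jk unfolding pcp_valid_def by auto
  then have neg: "\<forall>(l, s) \<in> set ((j, True) # gvec P j (pc_a P j k)). \<not> s \<longrightarrow> pc_r P l = \<infinity>"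
    using gvec_neg_letters_infinite by simp
  have "(j, True) # gvec P j (pc_a P j k) \<in> lists (alph P 2)"
    using jk gvec_in_lists[of 2 j P] by (simp add: alph_def)
  moreover have "[(k, True), (j, True)] \<in> lists (alph P 2)" using jk by (auto simp: alph_def)
  ultimately show ?thesis
    using collect_append_g1_eq_iff[OF valid der cons _ _ neg, of "[(k, True), (j, True)]"] jk by simp
qed

lemma collect_power_iff:
  assumes valid: "pcp_valid P" and der: "pcp_derived P" and cons: "consistent_from P 2"
    and j: "1 < j" "j \<le> pc_n P" "pc_r P j = enat t"
  shows "collect P (replicate t (j, True) @ [(1, True)]) =
      collect P (gvec P j (pc_e P j) @ [(1, True)]) \<longleftrightarrow>
    theta_tau P (replicate t (j, True)) = theta_tau P (gvec P j (pc_e P j))"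
proof -
  have "\<forall>k'. j < k' \<and> k' \<le> pc_n P \<longrightarrow> in_range P k' (pc_e P j k')"
    using valid j unfolding pcp_valid_def by auto
  then have neg: "\<forall>(l, s) \<in> set (gvec P j (pc_e P j)). \<not> s \<longrightarrow> pc_r P l = \<infinity>"
    by (rule gvec_neg_letters_infinite)
  have "gvec P j (pc_e P j) \<in> lists (alph P 2)" using j gvec_in_lists[of 2 j P] by simp
  moreover have "replicate t (j, True) \<in> lists (alph P 2)" using j by (auto simp: alph_def)
  ultimately show ?thesis
    using collect_append_g1_eq_iff[OF valid der cons _ _ _ _ neg, of "replicate t (j, True)"] j by simp
qed

theorem lemma10:
  fixes P :: pcp
  assumes "pcp_valid P"
    and "pcp_derived P"
    and "consistent_from P 2"
  shows "(\<exists>\<sigma> \<in> hom (pc_group P 2) (pc_group P 2).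
            \<forall>w \<in> lists (alph P 2). \<sigma> (theta P 2 w) = theta P 2 (tau P w))
         \<longleftrightarrow>
         ((\<forall>j k. 1 < j \<and> j < k \<and> k \<le> pc_n P \<longrightarrow>
             collect P ((j, True) # gvec P j (pc_a P j k) @ [(1, True)])
             = collect P [(k, True), (j, True), (1, True)]) \<and>
          (\<forall>j t. 1 < j \<and> j \<le> pc_n P \<and> pc_r P j = enat t \<longrightarrow>
             collect P (replicate t (j, True) @ [(1, True)])
             = collect P (gvec P j (pc_e P j) @ [(1, True)])))"
  unfolding induced_endomorphism_iff[OF assms(2)] theta_tau_respects_rels_iff[OF assms]
  using collect_conj_a_iff[OF assms] collect_power_iff[OF assms] by auto

end
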